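(* Let $M$ be a $\lambda$-term and $\vec x=\langle x_1,\dots,x_n\rangle$ a list of distinct variables with $FV(M)\subseteq\vec x$. There is a natural isomorphism of functors $((SD)^n)^{o}\times D\to\mathrm{Set}$ \[\llbracket M\rrbracket_{\vec x}\cong T_D(M)_{\vec x}.\]
   Context: $[n]=\{1,\dots,n\}$. Fix a class $\mathcal C$ of functions between finite ordinals equal to one of: all bijections, all injections, all surjections, all functions. For a small category $X$, $SX$ is the category whose objects are finite lists of objects of $X$ and whose morphisms $\langle x_1,\dots,x_n\rangle\to\langle y_1,\dots,y_m\rangle$ are $\langle\alpha,f_1,\dots,f_m\rangle$ with $\alpha:[m]\to[n]$ in $\mathcal C$, $f_i:x_{\alpha(i)}\to y_i$; composite of $\langle\alpha,\vec f\rangle$ then $\langle\beta,\vec g\rangle$ is $\langle\alpha\circ\beta,(g_i\circ f_{\beta(i)})_i\rangle$; tensor $\oplus$ is concatenation, unit $\langle\rangle$. Types: fix a small category $A$. $D=D_A$ is the colimit of $D_0=A$, $D_{k+1}=(SD_k)^{o}\times D_k\sqcup A$ along the canonical inclusions. Concretely its objects are $a::=o\mid\langle a_1,\dots,a_k\rangle\Rightarrow a$ ($o\in\mathrm{Ob}(A)$); its morphisms are those of $A$ between atoms, and $\langle\alpha,\vec f\rangle\Rightarrow f:(\vec a\Rightarrow a)\to(\vec a'\Rightarrow a')$ for $\langle\alpha,\vec f\rangle:\vec a'\to\vec a$ in $SD$ and $f:a\to a'$ in $D$ (composed componentwise); no others. $SD:=S(D_A)$. Contexts are objects $\Delta=\langle\vec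 a_1,\dots,\vec a_n\rangle$ of $(SD)^n$, written $x_1:\vec a_1,\dots,x_n:\vec a_n$; $\Gamma\otimes\Delta$ is componentwise concatenation; $\Delta\oplus\langle\vec a\rangle$ appends a component. For contexts $\Gamma_1,\dots,\Gamma_k$ and $\alpha:[k']\to[k]$ in $\mathcal C$, $\alpha^{\star}:\bigotimes_{i=1}^k\Gamma_i\to\bigotimes_{j=1}^{k'}\Gamma_{\alpha(j)}$ is, componentwise, the morphism $\langle\bar\alpha,\text{identities}\rangle$ where $\bar\alpha$ sends the $p$-th position of the $j$-th block (a copy of the block of $\Gamma_{\alpha(j)}$) to the $p$-th position of the $\alpha(j)$-th block. Denotation: for $FV(M)\subseteq\vec x$, $\llbracket M\rrbracket_{\vec x}:((SD)^n)^{o}\times D\to\mathrm{Set}$ is defined by induction (functorial action induced by hom-functors and universal property of coends; in the abstraction case a morphism $\langle\alpha,\vec f\rangle\Rightarrow f$ acts as $\llbracket M\rrbracket(1_\Delta\oplus\langle\alpha,\vec f\rangle,f)$): $\llbracket x_i\rrbracket_{\vec x}(\Delta,a)=(SD)^n(\Delta,\langle\langle\rangle,\dots,\langle a\rangle,\dots,\langle\rangle\rangle)$ ($\langle a\rangle$ in position $i$); $\llbracket\lambda x.M\rrbracket_{\vec x}(\Delta,a)=\llbracket M\rrbracket_{\vec x\oplus\langle x\rangle}(\Delta\oplus\langle\vec a'\rangle,a')$ if $a=\vec a'\Rightarrow a'$ and $\emptyset$ if $a$ is atomic; \[\llbracket MN\rrbracket_{\vec x}(\Delta,a)=\int^{\vec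 a=\langle a_1,\dots,a_k\rangle\in SD}\int^{\Gamma_0,\dots,\Gamma_k\in(SD)^n}\llbracket M\rrbracket_{\vec x}(\Gamma_0,\vec a\Rightarrow a)\times\prod_{i=1}^k\llbracket N\rrbracket_{\vec x}(\Gamma_i,a_i)\times(SD)^n\Big(\Delta,\bigotimes_{i=0}^k\Gamma_i\Big).\] Type system $E^S_A$ (judgments $\Delta\vdash M:a$, $\Delta\in(SD)^n$, $a\in D$; derivations record the morphisms used): (Var) from morphisms $f_j:\vec a_j\to\langle\rangle$ ($j\neq i$) and $f_i:\vec a_i\to\langle a\rangle$ in $SD$ infer $x_1:\vec a_1,\dots,x_n:\vec a_n\vdash x_i:a$; (Abs) from $\Delta,x:\vec a\vdash M:a$ infer $\Delta\vdash\lambda x.M:\vec a\Rightarrow a$; (App) from $\Gamma_0\vdash M:\langle a_1,\dots,a_k\rangle\Rightarrow a$, $\Gamma_i\vdash N:a_i$ ($1\le i\le k$) and a morphism $\eta:\Delta\to\bigotimes_{i=0}^k\Gamma_i$ in $(SD)^n$ infer $\Delta\vdash MN:a$. Right action of $\eta=\langle g_1,\dots,g_n\rangle:\Delta'\to\Delta$ on a derivation $\pi$ of $\Delta\vdash M:a$, giving $\pi\{\eta\}$ of $\Delta'\vdash M:a$: on Var replace each $f_j$ by $f_j\circ g_j$; on Abs apply $\{\eta\oplus\langle 1\rangle\}$ to the premise; on App replace the morphism $\theta$ by $\theta\circ\eta$. Left action of $g:a\to b$ in $D$, giving $[g]\pi$ of $\Delta\vdash M:b$: on Var replace $f_i$ by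 $\langle g\rangle\circ f_i$; on Abs with $g=\langle\alpha,\vec g\rangle\Rightarrow g'$ ($\langle\alpha,\vec g\rangle:\vec b\to\vec a$) the premise becomes $([g']\pi)\{1_\Delta\oplus\langle\alpha,\vec g\rangle\}$; on App apply $[1\Rightarrow g]$ to the premise for $M$. Congruence $\sim$: the smallest equivalence relation compatible with the typing rules and containing: (i) for $\langle\alpha,f_1,\dots,f_{k'}\rangle:\vec a=\langle a_1,\dots,a_k\rangle\to\vec b=\langle b_1,\dots,b_{k'}\rangle$ in $SD$, the App-derivation with premises $\pi_0$ of $\Gamma_0\vdash M:\vec b\Rightarrow a$, $[f_i]\pi_{\alpha(i)}$ of $\Gamma_{\alpha(i)}\vdash N:b_i$ ($1\le i\le k'$) and morphism $(1\otimes\alpha^{\star})\circ\eta$ is equivalent to the App-derivation with premises $[\langle\alpha,\vec f\rangle\Rightarrow 1]\pi_0$ of $\Gamma_0\vdash M:\vec a\Rightarrow a$, $\pi_i$ of $\Gamma_i\vdash N:a_i$ ($1\le i\le k$) and morphism $\eta:\Delta\to\bigotimes_{j=0}^k\Gamma_j$; (ii) for $\theta_j:\Gamma_j\to\Gamma'_j$, the App-derivation with premises $\pi_0\{\theta_0\},\pi_i\{\theta_i\}$ and morphism $\eta:\Delta\to\bigotimes\Gamma_j$ is equivalent to the one with premises $\pi_0,\pi_i$ (contexts $\Gamma'_j$) and morphism $(\bigotimes_j\theta_j)\circ\eta$. $T_D(M)_{\vec x}(\Delta,a)$ is the set of $\sim$-classes $\tilde\pi$ of derivations $\pi$ of $\Delta\vdash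 M:a$ in $E^S_A$, and for $\eta:\Delta'\to\Delta$, $f:a\to a'$ it maps $\tilde\pi$ to the class of $[f](\pi\{\eta\})$. *)

theory Defs
  imports Main
begin

section \<open>Small categories (the parameter A)\<close>

text \<open>Comp A g f is the composite "g after f".\<close>
record ('o,'m) cat =
  Ob :: "'o set"
  Mor :: "'m set"
  Dom :: "'m \<Rightarrow> 'o"
  Cod :: "'m \<Rightarrow> 'o"
  Comp :: "'m \<Rightarrow> 'm \<Rightarrow> 'm"
  Idm :: "'o \<Rightarrow> 'm"

definition is_cat :: "('o,'m,'z) cat_scheme \<Rightarrow> bool" where
  "is_cat A \<longleftrightarrow>
     (\<forall>f\<in>Mor A. Dom A f \<in> Ob A \<and> Cod A f \<in> Ob A) \<and>
     (\<forall>c\<in>Ob A. Idm A c \<in> Mor A \<and> Dom A (Idm A c) = c \<and> Cod A (Idm A c) = c) \<and>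
     (\<forall>f\<in>Mor A. \<forall>g\<in>Mor A. Cod A f = Dom A g \<longrightarrow>
        Comp A g f \<in> Mor A \<and> Dom A (Comp A g f) = Dom A f \<and> Cod A (Comp A g f) = Cod A g) \<and>
     (\<forall>f\<in>Mor A. Comp A f (Idm A (Dom A f)) = f \<and> Comp A (Idm A (Cod A f)) f = f) \<and>
     (\<forall>f\<in>Mor A. \<forall>g\<in>Mor A. \<forall>h\<in>Mor A. Cod A f = Dom A g \<longrightarrow> Cod A g = Dom A h \<longrightarrow>
        Comp A h (Comp A g f) = Comp A (Comp A h g) f)"

section \<open>The class C of maps between finite ordinals\<close>

text \<open>A map alpha : [m] \<rightarrow> [n] is represented (0-indexed) by the list of its values,
  of length m; the codomain size n is given separately.\<close>
datatype cls = Bij | Inj | Surj | AllFun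

fun inC :: "cls \<Rightarrow> nat \<Rightarrow> nat list \<Rightarrow> bool" where
  "inC Bij n \<alpha> = (distinct \<alpha> \<and> set \<alpha> = {..<n})"
| "inC Inj n \<alpha> = (distinct \<alpha> \<and> set \<alpha> \<subseteq> {..<n})"
| "inC Surj n \<alpha> = (set \<alpha> = {..<n})"
| "inC AllFun n \<alpha> = (set \<alpha> \<subseteq> {..<n})"

section \<open>The category D and SD\<close>

datatype 'o ty = At 'o | Arr "'o ty list" "'o ty"

text \<open>Morphisms of D.  ArrM k alpha fs g : (as \<Rightarrow> a) \<rightarrow> (as' \<Rightarrow> a') where
  (k, alpha, fs) : as' \<rightarrow> as in SD (k = length as') and g : a \<rightarrow> a'.\<close>
datatype 'm tm = AtM 'm | ArrM nat "nat list" "'m tm list" "'m tm"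

text \<open>A morphism of SD: (k, alpha, fs) : as \<rightarrow> bs with k = length as,
  alpha : [length bs] \<rightarrow> [k], fs ! i : as ! (alpha ! i) \<rightarrow> bs ! i.\<close>
type_synonym 'm smor = "nat \<times> nat list \<times> 'm tm list"
type_synonym 'o ctx = "'o ty list list"

fun dobj :: "('o,'m,'z) cat_scheme \<Rightarrow> 'o ty \<Rightarrow> bool" where
  "dobj A (At c) = (c \<in> Ob A)"
| "dobj A (Arr as a) = ((\<forall>b\<in>set as. dobj A b) \<and> dobj A a)"

definition sobj :: "('o,'m,'z) cat_scheme \<Rightarrow> 'o ty list \<Rightarrow> bool" where
  "sobj A as \<longleftrightarrow> (\<forall>b\<in>set as. dobj A b)"

definition cobj :: "('o,'m,'z) cat_scheme \<Rightarrow> nat \<Rightarrow> 'o ctx \<Rightarrow> bool" where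
  "cobj A n \<Delta> \<longleftrightarrow> length \<Delta> = n \<and> (\<forall>as\<in>set \<Delta>. sobj A as)"

inductive dmor :: "('o,'m,'z) cat_scheme \<Rightarrow> cls \<Rightarrow> 'm tm \<Rightarrow> 'o ty \<Rightarrow> 'o ty \<Rightarrow> bool"
  for A C where
  dmor_At: "m \<in> Mor A \<Longrightarrow> Dom A m = c \<Longrightarrow> Cod A m = c' \<Longrightarrow> dmor A C (AtM m) (At c) (At c')"
| dmor_Arr: "sobj A as \<Longrightarrow> sobj A as' \<Longrightarrow> k = length as' \<Longrightarrow> length \<alpha> = length as \<Longrightarrow>
    length fs = length as \<Longrightarrow> inC C k \<alpha> \<Longrightarrow>
    (\<forall>i<length as. \<alpha> ! i < k \<and> dmor A C (fs ! i) (as' ! (\<alpha> ! i)) (as ! i)) \<Longrightarrow>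
    dmor A C g a a' \<Longrightarrow> dmor A C (ArrM k \<alpha> fs g) (Arr as a) (Arr as' a')"

definition smor :: "('o,'m,'z) cat_scheme \<Rightarrow> cls \<Rightarrow> 'm smor \<Rightarrow> 'o ty list \<Rightarrow> 'o ty list \<Rightarrow> bool" where
  "smor A C \<phi> as bs \<longleftrightarrow> (case \<phi> of (k, \<alpha>, fs) \<Rightarrow>
     sobj A as \<and> sobj A bs \<and> k = length as \<and> length \<alpha> = length bs \<and> length fs = length bs \<and>
     inC C k \<alpha> \<and> (\<forall>i<length bs. \<alpha> ! i < k \<and> dmor A C (fs ! i) (as ! (\<alpha> ! i)) (bs ! i)))"

definition cmor :: "('o,'m,'z) cat_scheme \<Rightarrow> cls \<Rightarrow> 'm smor list \<Rightarrow> 'o ctx \<Rightarrow> 'o ctx \<Rightarrow> bool" where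
  "cmor A C \<eta> \<Delta> \<Gamma> \<longleftrightarrow> length \<eta> = length \<Delta> \<and> length \<Gamma> = length \<Delta> \<and>
     (\<forall>j<length \<Delta>. smor A C (\<eta> ! j) (\<Delta> ! j) (\<Gamma> ! j))"

fun did :: "('o,'m,'z) cat_scheme \<Rightarrow> 'o ty \<Rightarrow> 'm tm" where
  "did A (At c) = AtM (Idm A c)"
| "did A (Arr as a) = ArrM (length as) [0..<length as] (map (did A) as) (did A a)"

definition sid :: "('o,'m,'z) cat_scheme \<Rightarrow> 'o ty list \<Rightarrow> 'm smor" where
  "sid A as = (length as, [0..<length as], map (did A) as)"

definition cid :: "('o,'m,'z) cat_scheme \<Rightarrow> 'o ctx \<Rightarrow> 'm smor list" where
  "cid A \<Delta> = map (sid A) \<Delta>"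

text \<open>Composition in D: dcomp A g f is "g after f".\<close>
function dcomp :: "('o,'m,'z) cat_scheme \<Rightarrow> 'm tm \<Rightarrow> 'm tm \<Rightarrow> 'm tm" where
  "dcomp A (AtM g) (AtM f) = AtM (Comp A g f)"
| "dcomp A (ArrM k' \<beta> gs g0) (ArrM k \<alpha> fs f0) =
     ArrM k' (map (\<lambda>j. \<beta> ! j) \<alpha>)
       (map (\<lambda>i. if i < length fs \<and> \<alpha> ! i < length gs then dcomp A (fs ! i) (gs ! (\<alpha> ! i))
                 else undefined) [0..<length \<alpha>])
       (dcomp A g0 f0)"
| "dcomp A (AtM g) (ArrM k \<alpha> fs f0) = undefined"
| "dcomp A (ArrM k' \<beta> gs g0) (AtM f) = undefined"
  by pat_completeness auto
termination
proof (relation "measure (\<lambda>(A, g, f). size g + size f)")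
  show "wf (measure (\<lambda>(A, g, f). size g + size f))" by simp
next
  fix A :: "('o,'m,'z) cat_scheme" and k' k i :: nat and \<beta> \<alpha> :: "nat list" and gs fs :: "'m tm list" and g0 f0 :: "'m tm"
  assume h: "i \<in> set [0..<length \<alpha>]" "i < length fs \<and> \<alpha> ! i < length gs"
    have "size (fs ! i) \<le> size_list size fs"
      using h by (intro size_list_estimation') (auto simp: nth_mem)
    moreover have "size (gs ! (\<alpha> ! i)) \<le> size_list size gs"
      using h by (intro size_list_estimation') (auto simp: nth_mem)
    ultimately show "((A, fs ! i, gs ! (\<alpha> ! i)), A, ArrM k' \<beta> gs g0, ArrM k \<alpha> fs f0)
        \<in> measure (\<lambda>(A, g, f). size g + size f)" by auto
qed auto

text \<open>sthen A phi psi : "phi then psi" in SD (first phi, then psi).\<close>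
fun sthen :: "('o,'m,'z) cat_scheme \<Rightarrow> 'm smor \<Rightarrow> 'm smor \<Rightarrow> 'm smor" where
  "sthen A (k, \<alpha>, fs) (m, \<beta>, gs) =
     (k, map (\<lambda>j. \<alpha> ! j) \<beta>, map (\<lambda>i. dcomp A (gs ! i) (fs ! (\<beta> ! i))) [0..<length \<beta>])"

text \<open>cthen A eta theta : "eta then theta" in (SD)^n (i.e. theta \<circ> eta).\<close>
definition cthen :: "('o,'m,'z) cat_scheme \<Rightarrow> 'm smor list \<Rightarrow> 'm smor list \<Rightarrow> 'm smor list" where
  "cthen A \<eta> \<theta> = map2 (sthen A) \<eta> \<theta>"

text \<open>Tensor (concatenation) of SD-morphisms and of contexts/context morphisms.\<close>
fun stensor :: "'m smor \<Rightarrow> 'm smor \<Rightarrow> 'm smor" where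
  "stensor (k1, \<alpha>1, f1) (k2, \<alpha>2, f2) = (k1 + k2, \<alpha>1 @ map (\<lambda>i. i + k1) \<alpha>2, f1 @ f2)"

definition ctensor :: "nat \<Rightarrow> 'o ctx list \<Rightarrow> 'o ctx" where
  "ctensor n \<Gamma>s = map (\<lambda>p. concat (map (\<lambda>\<Gamma>. \<Gamma> ! p) \<Gamma>s)) [0..<n]"

definition cmtensor :: "nat \<Rightarrow> 'm smor list list \<Rightarrow> 'm smor list" where
  "cmtensor n \<theta>s = map (\<lambda>p. foldr stensor (map (\<lambda>\<theta>. \<theta> ! p) \<theta>s) (0, [], [])) [0..<n]"

text \<open>alpha-star : ctensor n Gs \<rightarrow> ctensor n (map (\<lambda>j. Gs ! (alpha ! j)) [0..<length alpha]).\<close>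
definition astar :: "('o,'m,'z) cat_scheme \<Rightarrow> nat \<Rightarrow> 'o ctx list \<Rightarrow> nat list \<Rightarrow> 'm smor list" where
  "astar A n \<Gamma>s \<alpha> = map (\<lambda>p.
     let blk = (\<lambda>i. (\<Gamma>s ! i) ! p);
         off = (\<lambda>i. sum_list (map (\<lambda>i'. length (blk i')) [0..<i]));
         src = concat (map blk [0..<length \<Gamma>s]);
         tgt = concat (map (\<lambda>j. blk (\<alpha> ! j)) [0..<length \<alpha>])
     in (length src,
         concat (map (\<lambda>j. map (\<lambda>q. off (\<alpha> ! j) + q) [0..<length (blk (\<alpha> ! j))]) [0..<length \<alpha>]),
         map (did A) tgt)) [0..<n]"

datatype 'v lterm = Var 'v | Lam 'v "'v lterm" | App "'v lterm" "'v lterm"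

fun FV :: "'v lterm \<Rightarrow> 'v set" where
  "FV (Var x) = {x}"
| "FV (Lam x M) = FV M - {x}"
| "FV (App M N) = FV M \<union> FV N"

text \<open>Index of a variable in the list of variables (last occurrence, so that a
  re-bound variable shadows the outer one).\<close>
definition lastidx :: "'v list \<Rightarrow> 'v \<Rightarrow> nat" where
  "lastidx xs x = (GREATEST i. i < length xs \<and> xs ! i = x)"

section \<open>The denotation [[M]]_xs as a Set-valued functor\<close>

text \<open>Elements are represented by representatives; each value of the functor is the
  quotient of a carrier by an equivalence relation (the coend quotient).
  EMor hs : an element of a hom-set (SD)^n(Delta, ...);
  EApp as Gs u vs theta : a representative (u, v_1..v_k, theta) of the coend at a-vector as
  and contexts Gs = [Gamma_0, ..., Gamma_k].\<close>
datatype ('o,'m) el = EMor "'m smor list"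
  | EApp "'o ty list" "'o ctx list" "('o,'m) el" "('o,'m) el list" "'m smor list"

definition appcar :: "('o,'m,'z) cat_scheme \<Rightarrow> cls \<Rightarrow> nat
   \<Rightarrow> ('o ctx \<Rightarrow> 'o ty \<Rightarrow> ('o,'m) el set) \<Rightarrow> ('o ctx \<Rightarrow> 'o ty \<Rightarrow> ('o,'m) el set)
   \<Rightarrow> 'o ctx \<Rightarrow> 'o ty \<Rightarrow> ('o,'m) el set" where
  "appcar A C n cM cN \<Delta> a = {EApp as \<Gamma>s u vs \<theta> | as \<Gamma>s u vs \<theta>.
     sobj A as \<and> length \<Gamma>s = Suc (length as) \<and> (\<forall>\<Gamma>\<in>set \<Gamma>s. cobj A n \<Gamma>) \<and>
     u \<in> cM (hd \<Gamma>s) (Arr as a) \<and> length vs = length as \<and>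
     (\<forall>i<length as. vs ! i \<in> cN (\<Gamma>s ! Suc i) (as ! i)) \<and>
     cmor A C \<theta> \<Delta> (ctensor n \<Gamma>s)}"

text \<open>Generating relation of the coend equivalence: componentwise equivalence of the
  factors, dinaturality in the contexts Gamma_j, and dinaturality in the a-vector.\<close>
definition appgen :: "('o,'m,'z) cat_scheme \<Rightarrow> cls \<Rightarrow> nat
   \<Rightarrow> ('o ctx \<Rightarrow> 'o ty \<Rightarrow> ('o,'m) el set) \<Rightarrow> ('o ctx \<Rightarrow> 'o ty \<Rightarrow> ('o,'m) el rel)
   \<Rightarrow> ('m smor list \<Rightarrow> 'm tm \<Rightarrow> ('o,'m) el \<Rightarrow> ('o,'m) el)
   \<Rightarrow> ('o ctx \<Rightarrow> 'o ty \<Rightarrow> ('o,'m) el set) \<Rightarrow> ('o ctx \<Rightarrow> 'o ty \<Rightarrow> ('o,'m) el rel)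
   \<Rightarrow> ('m smor list \<Rightarrow> 'm tm \<Rightarrow> ('o,'m) el \<Rightarrow> ('o,'m) el)
   \<Rightarrow> 'o ctx \<Rightarrow> 'o ty \<Rightarrow> ('o,'m) el rel" where
  "appgen A C n cM rM tM cN rN tN \<Delta> a = {(e, e'). 
     e \<in> appcar A C n cM cN \<Delta> a \<and> e' \<in> appcar A C n cM cN \<Delta> a \<and>
     ((\<exists>as \<Gamma>s u vs u' vs' \<theta>. e = EApp as \<Gamma>s u vs \<theta> \<and> e' = EApp as \<Gamma>s u' vs' \<theta> \<and>
         (u, u') \<in> rM (hd \<Gamma>s) (Arr as a) \<and> length vs' = length vs \<and>
         (\<forall>i<length vs. (vs ! i, vs' ! i) \<in> rN (\<Gamma>s ! Suc i) (as ! i)))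
    \<or> (\<exists>as \<Gamma>s \<Gamma>s' \<theta>s u vs \<eta>. length \<theta>s = length \<Gamma>s \<and> length \<Gamma>s' = length \<Gamma>s \<and>
         (\<forall>j<length \<Gamma>s. cmor A C (\<theta>s ! j) (\<Gamma>s ! j) (\<Gamma>s' ! j)) \<and>
         e = EApp as \<Gamma>s (tM (hd \<theta>s) (did A (Arr as a)) u)
               (map (\<lambda>i. tN (\<theta>s ! Suc i) (did A (as ! i)) (vs ! i)) [0..<length as]) \<eta> \<and>
         e' = EApp as \<Gamma>s' u vs (cthen A \<eta> (cmtensor n \<theta>s)))
    \<or> (\<exists>as bs k \<alpha> fs \<Gamma>s u vs \<eta>. smor A C (k, \<alpha>, fs) as bs \<and>
         e = EApp bs (hd \<Gamma>s # map (\<lambda>j. \<Gamma>s ! Suc (\<alpha> ! j)) [0..<length bs]) u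
               (map (\<lambda>j. tN (cid A (\<Gamma>s ! Suc (\<alpha> ! j))) (fs ! j) (vs ! (\<alpha> ! j))) [0..<length bs])
               (cthen A \<eta> (cmtensor n [cid A (hd \<Gamma>s), astar A n (tl \<Gamma>s) \<alpha>])) \<and>
         e' = EApp as \<Gamma>s (tM (cid A (hd \<Gamma>s)) (ArrM k \<alpha> fs (did A a)) u) vs \<eta>))}"

definition appact :: "('o,'m,'z) cat_scheme
   \<Rightarrow> ('m smor list \<Rightarrow> 'm tm \<Rightarrow> ('o,'m) el \<Rightarrow> ('o,'m) el)
   \<Rightarrow> 'm smor list \<Rightarrow> 'm tm \<Rightarrow> ('o,'m) el \<Rightarrow> ('o,'m) el" where
  "appact A tM \<eta> f e = (case e of
      EApp as \<Gamma>s u vs \<theta> \<Rightarrow>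
        EApp as \<Gamma>s (tM (cid A (hd \<Gamma>s)) (ArrM (length as) [0..<length as] (map (did A) as) f) u) vs
          (cthen A \<eta> \<theta>)
    | _ \<Rightarrow> e)"

text \<open>sem A C xs M = (carrier, equivalence, action on representatives); the action
  sem-action eta f maps the value at (Delta, a) to the value at (Delta', a') for
  eta : Delta' \<rightarrow> Delta, f : a \<rightarrow> a'.\<close>
primrec sem :: "('o,'m,'z) cat_scheme \<Rightarrow> cls \<Rightarrow> 'v list \<Rightarrow> 'v lterm \<Rightarrow>
    ('o ctx \<Rightarrow> 'o ty \<Rightarrow> ('o,'m) el set) \<times> ('o ctx \<Rightarrow> 'o ty \<Rightarrow> ('o,'m) el rel)
    \<times> ('m smor list \<Rightarrow> 'm tm \<Rightarrow> ('o,'m) el \<Rightarrow> ('o,'m) el)" where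
  "sem A C xs (Var x) =
     (let i = lastidx xs x; n = length xs;
          car = (\<lambda>\<Delta> a. {EMor hs | hs. cmor A C hs \<Delta> (map (\<lambda>j. if j = i then [a] else []) [0..<n])})
      in (car, (\<lambda>\<Delta> a. Id_on (car \<Delta> a)),
          (\<lambda>\<eta> f e. case e of
              EMor hs \<Rightarrow> EMor (map (\<lambda>j. if j = i then sthen A (sthen A (\<eta> ! j) (hs ! j)) (1, [0], [f])
                                        else sthen A (\<eta> ! j) (hs ! j)) [0..<n])
            | _ \<Rightarrow> e)))"
| "sem A C xs (Lam x M) =
     (case sem A C (xs @ [x]) M of (c, r, t) \<Rightarrow>
       ((\<lambda>\<Delta> a. case a of Arr as b \<Rightarrow> c (\<Delta> @ [as]) b | At _ \<Rightarrow> {}),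
        (\<lambda>\<Delta> a. case a of Arr as b \<Rightarrow> r (\<Delta> @ [as]) b | At _ \<Rightarrow> {}),
        (\<lambda>\<eta> f e. case f of ArrM k \<alpha> gs g \<Rightarrow> t (\<eta> @ [(k, \<alpha>, gs)]) g e | AtM _ \<Rightarrow> e)))"
| "sem A C xs (App M N) =
     (case sem A C xs M of (cM, rM, tM) \<Rightarrow> case sem A C xs N of (cN, rN, tN) \<Rightarrow>
       (appcar A C (length xs) cM cN,
        (\<lambda>\<Delta> a. Restr ((appgen A C (length xs) cM rM tM cN rN tN \<Delta> a
                   \<union> (appgen A C (length xs) cM rM tM cN rN tN \<Delta> a)\<inverse>)\<^sup>*)
                 (appcar A C (length xs) cM cN \<Delta> a)),
        appact A tM))"

text \<open>The value of [[M]]_xs at (Delta, a), as a set, and its functorial action.\<close>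
definition DQ :: "('o,'m,'z) cat_scheme \<Rightarrow> cls \<Rightarrow> 'v list \<Rightarrow> 'v lterm \<Rightarrow> 'o ctx \<Rightarrow> 'o ty
     \<Rightarrow> ('o,'m) el set set" where
  "DQ A C xs M \<Delta> a = fst (sem A C xs M) \<Delta> a // fst (snd (sem A C xs M)) \<Delta> a"

definition DQact :: "('o,'m,'z) cat_scheme \<Rightarrow> cls \<Rightarrow> 'v list \<Rightarrow> 'v lterm \<Rightarrow> 'o ctx \<Rightarrow> 'o ty
     \<Rightarrow> 'm smor list \<Rightarrow> 'm tm \<Rightarrow> ('o,'m) el set \<Rightarrow> ('o,'m) el set" where
  "DQact A C xs M \<Delta>' a' \<eta> f X =
     (\<Union>e\<in>X. fst (snd (sem A C xs M)) \<Delta>' a' `` {snd (snd (sem A C xs M)) \<eta> f e})"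

section \<open>The type system E^S_A, its derivations and T_D(M)\<close>

text \<open>Derivations record the judgement (context, type) at each node and the morphisms
  used.  DVar Delta a i hs: Var rule for x_i; DAbs; DApp Delta a pi0 pis eta.\<close>
datatype ('o,'m) dv = DVar "'o ctx" "'o ty" nat "'m smor list"
  | DAbs "'o ctx" "'o ty" "('o,'m) dv"
  | DApp "'o ctx" "'o ty" "('o,'m) dv" "('o,'m) dv list" "'m smor list"

fun dvctx :: "('o,'m) dv \<Rightarrow> 'o ctx" where
  "dvctx (DVar \<Delta> a i hs) = \<Delta>"
| "dvctx (DAbs \<Delta> a p) = \<Delta>"
| "dvctx (DApp \<Delta> a p ps h) = \<Delta>"

fun dvty :: "('o,'m) dv \<Rightarrow> 'o ty" where
  "dvty (DVar \<Delta> a i hs) = a"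
| "dvty (DAbs \<Delta> a p) = a"
| "dvty (DApp \<Delta> a p ps h) = a"

inductive deriv :: "('o,'m,'z) cat_scheme \<Rightarrow> cls \<Rightarrow> 'v list \<Rightarrow> ('o,'m) dv \<Rightarrow> 'o ctx
     \<Rightarrow> 'v lterm \<Rightarrow> 'o ty \<Rightarrow> bool" for A C where
  deriv_Var: "cobj A (length xs) \<Delta> \<Longrightarrow> dobj A a \<Longrightarrow> x \<in> set xs \<Longrightarrow> i = lastidx xs x \<Longrightarrow>
    length hs = length xs \<Longrightarrow>
    (\<forall>j<length xs. smor A C (hs ! j) (\<Delta> ! j) (if j = i then [a] else [])) \<Longrightarrow>
    deriv A C xs (DVar \<Delta> a i hs) \<Delta> (Var x) a"
| deriv_Abs: "deriv A C (xs @ [x]) p (\<Delta> @ [as]) M b \<Longrightarrow>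
    deriv A C xs (DAbs \<Delta> (Arr as b) p) \<Delta> (Lam x M) (Arr as b)"
| deriv_App: "deriv A C xs p0 \<Gamma>0 M (Arr as a) \<Longrightarrow> length ps = length as \<Longrightarrow>
    length \<Gamma>s = length as \<Longrightarrow> (\<forall>i<length as. deriv A C xs (ps ! i) (\<Gamma>s ! i) N (as ! i)) \<Longrightarrow>
    cobj A (length xs) \<Delta> \<Longrightarrow> cmor A C \<eta> \<Delta> (ctensor (length xs) (\<Gamma>0 # \<Gamma>s)) \<Longrightarrow>
    deriv A C xs (DApp \<Delta> a p0 ps \<eta>) \<Delta> (App M N) a"

text \<open>Right action  pi{eta}  (eta : Delta' \<rightarrow> Delta).\<close>
fun ract :: "('o,'m,'z) cat_scheme \<Rightarrow> 'o ctx \<Rightarrow> 'm smor list \<Rightarrow> ('o,'m) dv \<Rightarrow> ('o,'m) dv" where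
  "ract A \<Delta>' \<eta> (DVar \<Delta> a i hs) = DVar \<Delta>' a i (map2 (sthen A) \<eta> hs)"
| "ract A \<Delta>' \<eta> (DAbs \<Delta> b p) = (case b of
      Arr as _ \<Rightarrow> DAbs \<Delta>' b (ract A (\<Delta>' @ [as]) (\<eta> @ [sid A as]) p)
    | At _ \<Rightarrow> DAbs \<Delta>' b p)"
| "ract A \<Delta>' \<eta> (DApp \<Delta> a p0 ps \<theta>) = DApp \<Delta>' a p0 ps (cthen A \<eta> \<theta>)"

text \<open>Left action  [g]pi  (g : a \<rightarrow> b, b given explicitly).\<close>
fun lact :: "('o,'m,'z) cat_scheme \<Rightarrow> 'm tm \<Rightarrow> 'o ty \<Rightarrow> ('o,'m) dv \<Rightarrow> ('o,'m) dv" where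
  "lact A g b (DVar \<Delta> a i hs) = DVar \<Delta> b i (hs[i := sthen A (hs ! i) (1, [0], [g])])"
| "lact A g b (DAbs \<Delta> a p) = (case (g, b) of
      (ArrM k \<alpha> gs g', Arr bs b') \<Rightarrow>
        DAbs \<Delta> b (ract A (\<Delta> @ [bs]) (cid A \<Delta> @ [(k, \<alpha>, gs)]) (lact A g' b' p))
    | _ \<Rightarrow> DAbs \<Delta> b p)"
| "lact A g b (DApp \<Delta> a p0 ps \<theta>) = (case dvty p0 of
      Arr as _ \<Rightarrow> DApp \<Delta> b (lact A (ArrM (length as) [0..<length as] (map (did A) as) g) (Arr as b) p0) ps \<theta>
    | At _ \<Rightarrow> DApp \<Delta> b p0 ps \<theta>)"

inductive dcong :: "('o,'m,'z) cat_scheme \<Rightarrow> cls \<Rightarrow> 'v list \<Rightarrow> 'v lterm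
     \<Rightarrow> ('o,'m) dv \<Rightarrow> ('o,'m) dv \<Rightarrow> bool" for A C where
  dcong_refl: "deriv A C xs p \<Delta> M a \<Longrightarrow> dcong A C xs M p p"
| dcong_sym: "dcong A C xs M p q \<Longrightarrow> dcong A C xs M q p"
| dcong_trans: "dcong A C xs M p q \<Longrightarrow> dcong A C xs M q r \<Longrightarrow> dcong A C xs M p r"
| dcong_Abs: "dcong A C (xs @ [x]) M p q \<Longrightarrow>
    deriv A C xs (DAbs \<Delta> a p) \<Delta> (Lam x M) a \<Longrightarrow> deriv A C xs (DAbs \<Delta> a q) \<Delta> (Lam x M) a \<Longrightarrow>
    dcong A C xs (Lam x M) (DAbs \<Delta> a p) (DAbs \<Delta> a q)"
| dcong_App: "dcong A C xs M p0 q0 \<Longrightarrow> length qs = length ps \<Longrightarrow>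
    (\<forall>i<length ps. dcong A C xs N (ps ! i) (qs ! i)) \<Longrightarrow>
    deriv A C xs (DApp \<Delta> a p0 ps \<eta>) \<Delta> (App M N) a \<Longrightarrow>
    deriv A C xs (DApp \<Delta> a q0 qs \<eta>) \<Delta> (App M N) a \<Longrightarrow>
    dcong A C xs (App M N) (DApp \<Delta> a p0 ps \<eta>) (DApp \<Delta> a q0 qs \<eta>)"
| dcong_i: "smor A C (k, \<alpha>, fs) as bs \<Longrightarrow>
    lhs = DApp \<Delta> a p0
            (map (\<lambda>j. lact A (fs ! j) (bs ! j) (ps ! (\<alpha> ! j))) [0..<length bs])
            (cthen A \<eta> (cmtensor (length xs) [cid A (dvctx p0), astar A (length xs) (map dvctx ps) \<alpha>])) \<Longrightarrow>
    rhs = DApp \<Delta> a (lact A (ArrM k \<alpha> fs (did A a)) (Arr as a) p0) ps \<eta> \<Longrightarrow>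
    deriv A C xs lhs \<Delta> (App M N) a \<Longrightarrow> deriv A C xs rhs \<Delta> (App M N) a \<Longrightarrow>
    dcong A C xs (App M N) lhs rhs"
| dcong_ii: "length \<theta>s = Suc (length ps) \<Longrightarrow> length \<Gamma>s = length \<theta>s \<Longrightarrow>
    (\<forall>j<length \<theta>s. cmor A C (\<theta>s ! j) (\<Gamma>s ! j) ((dvctx p0 # map dvctx ps) ! j)) \<Longrightarrow>
    lhs = DApp \<Delta> a (ract A (\<Gamma>s ! 0) (\<theta>s ! 0) p0)
            (map (\<lambda>i. ract A (\<Gamma>s ! Suc i) (\<theta>s ! Suc i) (ps ! i)) [0..<length ps]) \<eta> \<Longrightarrow>
    rhs = DApp \<Delta> a p0 ps (cthen A \<eta> (cmtensor (length xs) \<theta>s)) \<Longrightarrow>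
    deriv A C xs lhs \<Delta> (App M N) a \<Longrightarrow> deriv A C xs rhs \<Delta> (App M N) a \<Longrightarrow>
    dcong A C xs (App M N) lhs rhs"

text \<open>T_D(M)_xs (Delta, a) and its functorial action  [f](pi{eta}).\<close>
definition TQ :: "('o,'m,'z) cat_scheme \<Rightarrow> cls \<Rightarrow> 'v list \<Rightarrow> 'v lterm \<Rightarrow> 'o ctx \<Rightarrow> 'o ty
     \<Rightarrow> ('o,'m) dv set set" where
  "TQ A C xs M \<Delta> a = {p. deriv A C xs p \<Delta> M a} // {(p, q). dcong A C xs M p q}"

definition TQact :: "('o,'m,'z) cat_scheme \<Rightarrow> cls \<Rightarrow> 'v list \<Rightarrow> 'v lterm \<Rightarrow> 'o ctx \<Rightarrow> 'o ty
     \<Rightarrow> 'm smor list \<Rightarrow> 'm tm \<Rightarrow> ('o,'m) dv set \<Rightarrow> ('o,'m) dv set" where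
  "TQact A C xs M \<Delta>' a' \<eta> f X =
     (\<Union>p\<in>X. {q. dcong A C xs M (lact A f a' (ract A \<Delta>' \<eta> p)) q})"

end

(*
  A derivation of \<Delta> \<turnstile> M : a carries, node by node, exactly the data of a representative
  of an element of [[M]](\<Delta>, a): a Var node is an element of a hom-set, an Abs node is
  transparent, and an App node is a tuple of the coend defining [[M N]].  Reading derivations
  this way (dv_el) is, for each (\<Delta>, a), a bijection onto the representatives, and it turns
  the actions [f](\<pi>{\<eta>}) into the functorial action of [[M]].  Under this bijection the
  generators of the congruence match the generators of the coend relation: congruence of the
  premises gives the factorwise generator, rule (ii) dinaturality in the contexts, and rule (i)
  dinaturality in the argument types.  Hence, by induction on M, two derivations are congruent
  iff their representatives are identified, and taking preimages under dv_el is a natural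
  bijection from [[M]] to T_D(M).
*)
theory Submission
  imports Defs
begin

section \<open>Morphisms of D, of SD and of contexts\<close>

lemma inC_upt: "inC C k [0..<k]"
  by (cases C) auto

lemma inC_map_nth:
  assumes "inC C k \<alpha>" "inC C k' \<beta>" "length \<beta> = k"
  shows "inC C k' (map ((!) \<beta>) \<alpha>)"
proof -
  have img: "(!) \<beta> ` {..<k} = set \<beta>"
    using assms(3) by (auto simp: in_set_conv_nth)
  have inj: "inj_on ((!) \<beta>) (set \<alpha>)" if "distinct \<beta>" "set \<alpha> \<subseteq> {..<k}"
    using that assms(3) by (auto simp: inj_on_def nth_eq_iff_index_eq subset_iff)
  show ?thesis
    using assms img inj by (cases C) (auto simp: distinct_map)
qed

inductive_cases dmor_AtE: "dmor A C g (At c) d"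
inductive_cases dmor_AtE': "dmor A C g d (At c)"
inductive_cases dmor_ArrE: "dmor A C g (Arr as a) d"
inductive_cases dmor_ArrE': "dmor A C g d (Arr as a)"

lemma smor_sobj: "smor A C \<phi> as bs \<Longrightarrow> sobj A as \<and> sobj A bs"
  by (cases \<phi>) (auto simp: smor_def)

lemma cmor_length: "cmor A C \<eta> \<Delta> \<Gamma> \<Longrightarrow> length \<eta> = length \<Delta> \<and> length \<Gamma> = length \<Delta>"
  by (simp add: cmor_def)

lemma cmor_nth: "cmor A C \<eta> \<Delta> \<Gamma> \<Longrightarrow> j < length \<Delta> \<Longrightarrow> smor A C (\<eta> ! j) (\<Delta> ! j) (\<Gamma> ! j)"
  by (simp add: cmor_def)

lemma cmor_cobj: "cmor A C \<eta> \<Delta>' \<Delta> \<Longrightarrow> cobj A n \<Delta> \<Longrightarrow> cobj A n \<Delta>'"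
  unfolding cobj_def by (metis cmor_length cmor_nth smor_sobj in_set_conv_nth)

lemma cmor_append:
  "cmor A C \<eta> \<Delta> \<Gamma> \<Longrightarrow> smor A C \<phi> as bs \<Longrightarrow> cmor A C (\<eta> @ [\<phi>]) (\<Delta> @ [as]) (\<Gamma> @ [bs])"
  by (auto simp: cmor_def nth_append)

lemma cthen_append:
  "length \<eta> = length \<theta> \<Longrightarrow> cthen A (\<eta> @ [\<phi>]) (\<theta> @ [\<psi>]) = cthen A \<eta> \<theta> @ [sthen A \<phi> \<psi>]"
  by (simp add: cthen_def)

lemma cid_append: "cid A (\<Delta> @ [as]) = cid A \<Delta> @ [sid A as]"
  by (simp add: cid_def)

locale type_category =
  fixes A :: "('o, 'm, 'z) cat_scheme" and C :: cls
  assumes is_cat: "is_cat A"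
begin

lemma dmor_dobj: "dmor A C f a b \<Longrightarrow> dobj A a \<and> dobj A b"
  by (induction rule: dmor.induct) (use is_cat in \<open>auto simp: is_cat_def sobj_def\<close>)

lemma did_dmor: "dobj A a \<Longrightarrow> dmor A C (did A a) a a"
proof (induction a)
  case (At c)
  then show ?case
    using is_cat by (auto intro!: dmor_At simp: is_cat_def)
next
  case (Arr as a)
  then show ?case
    by (auto intro!: dmor_Arr simp: sobj_def inC_upt)
qed

lemma dcomp_did:
  "dmor A C f a b \<Longrightarrow> dcomp A (did A b) f = f \<and> dcomp A f (did A a) = f"
proof (induction rule: dmor.induct)
  case (dmor_At m c c')
  then show ?case
    using is_cat by (auto simp: is_cat_def)
next
  case (dmor_Arr as as' k \<alpha> fs g a a')
  then show ?case
    by (auto intro!: nth_equalityI)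
qed

lemma dcomp_did_left: "dmor A C f a b \<Longrightarrow> dcomp A (did A b) f = f"
  and dcomp_did_right: "dmor A C f a b \<Longrightarrow> dcomp A f (did A a) = f"
  using dcomp_did by blast+

text \<open>Induction on the middle object, since the argument components of a composite
  compose, in reverse order, through the argument components of the middle object.\<close>
lemma dcomp_dmor: "dmor A C f a b \<Longrightarrow> dmor A C g b c \<Longrightarrow> dmor A C (dcomp A g f) a c"
proof (induction b arbitrary: a c f g)
  case (At o2)
  then show ?case
    using is_cat by (auto elim!: dmor_AtE dmor_AtE' intro!: dmor_At simp: is_cat_def)
next
  case (Arr bs b)
  from Arr.prems(1) obtain as a0 k \<alpha> fs f0 where f: "f = ArrM k \<alpha> fs f0" "a = Arr as a0"
    "sobj A as" "k = length bs" "length \<alpha> = length as" "length fs = length as" "inC C k \<alpha>"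
    "\<forall>i<length as. \<alpha> ! i < k \<and> dmor A C (fs ! i) (bs ! (\<alpha> ! i)) (as ! i)" "dmor A C f0 a0 b"
    by (elim dmor_ArrE') auto
  from Arr.prems(2) obtain cs c0 k' \<beta> gs g0 where g: "g = ArrM k' \<beta> gs g0" "c = Arr cs c0"
    "sobj A cs" "k' = length cs" "length \<beta> = length bs" "length gs = length bs" "inC C k' \<beta>"
    "\<forall>i<length bs. \<beta> ! i < k' \<and> dmor A C (gs ! i) (cs ! (\<beta> ! i)) (bs ! i)" "dmor A C g0 b c0"
    by (elim dmor_ArrE) auto
  have "dmor A C (dcomp A (fs ! i) (gs ! (\<alpha> ! i))) (cs ! (\<beta> ! (\<alpha> ! i))) (as ! i)"
    if "i < length as" for i
    using Arr.IH(1) f g that by (metis nth_mem)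
  then show ?case
    unfolding f g using f g Arr.IH(2) inC_map_nth[of C k \<alpha> k' \<beta>]
    by (auto intro!: dmor_Arr)
qed

text \<open>Induction on the middle morphism, whose argument components stay in the middle
  of the argument components of both composites.\<close>
lemma dcomp_assoc:
  "dmor A C g b c \<Longrightarrow> dmor A C f a b \<Longrightarrow> dmor A C h c d \<Longrightarrow>
   dcomp A h (dcomp A g f) = dcomp A (dcomp A h g) f"
proof (induction arbitrary: a d f h rule: dmor.induct)
  case (dmor_At m b c)
  then show ?case
    using is_cat by (auto elim!: dmor_AtE dmor_AtE' simp: is_cat_def)
next
  case (dmor_Arr bs cs k \<beta> gs g0 b c)
  from dmor_Arr.prems(1) obtain as a0 k0 \<alpha> fs f0 where f: "f = ArrM k0 \<alpha> fs f0" "a = Arr as a0"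
    "k0 = length bs" "length \<alpha> = length as" "length fs = length as"
    "\<forall>i<length as. \<alpha> ! i < k0 \<and> dmor A C (fs ! i) (bs ! (\<alpha> ! i)) (as ! i)" "dmor A C f0 a0 b"
    by (elim dmor_ArrE') auto
  from dmor_Arr.prems(2) obtain ds d0 k' \<gamma> hs h0 where h: "h = ArrM k' \<gamma> hs h0" "d = Arr ds d0"
    "length \<gamma> = length cs" "length hs = length cs"
    "\<forall>i<length cs. \<gamma> ! i < k' \<and> dmor A C (hs ! i) (ds ! (\<gamma> ! i)) (cs ! i)" "dmor A C h0 c d0"
    by (elim dmor_ArrE) auto
  have "dcomp A (fs ! i) (dcomp A (gs ! (\<alpha> ! i)) (hs ! (\<beta> ! (\<alpha> ! i)))) =
        dcomp A (dcomp A (fs ! i) (gs ! (\<alpha> ! i))) (hs ! (\<beta> ! (\<alpha> ! i)))"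
    if "i < length as" for i
    using dmor_Arr.IH(1) dmor_Arr.hyps f h that by metis
  moreover have "\<forall>x\<in>set \<alpha>. x < length \<beta>"
    using f dmor_Arr.hyps by (auto simp: in_set_conv_nth)
  ultimately show ?case
    unfolding f h using f h dmor_Arr by (auto intro!: nth_equalityI)
qed

lemma sid_smor: "sobj A as \<Longrightarrow> smor A C (sid A as) as as"
  by (auto simp: sid_def smor_def inC_upt sobj_def intro!: did_dmor)

lemma smor_singleton: "dmor A C g a b \<Longrightarrow> smor A C (1, [0], [g]) [a] [b]"
  using dmor_dobj[of g a b] by (cases C) (auto simp: smor_def sobj_def)

lemma sthen_smor:
  assumes "smor A C \<phi> as bs" "smor A C \<psi> bs cs"
  shows "smor A C (sthen A \<phi> \<psi>) as cs"
proof -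
  obtain k \<alpha> fs m \<beta> gs where "\<phi> = (k, \<alpha>, fs)" "\<psi> = (m, \<beta>, gs)"
    by (cases \<phi>, cases \<psi>) auto
  then show ?thesis
    using assms inC_map_nth[of C m \<beta> k \<alpha>] by (auto simp: smor_def intro: dcomp_dmor)
qed

lemma sthen_sid_left: "smor A C \<phi> as bs \<Longrightarrow> sthen A (sid A as) \<phi> = \<phi>"
  by (cases \<phi>) (auto simp: smor_def sid_def intro!: nth_equalityI dcomp_did_left dcomp_did_right)

lemma sthen_sid_right: "smor A C \<phi> as bs \<Longrightarrow> sthen A \<phi> (sid A bs) = \<phi>"
  by (cases \<phi>) (auto simp: smor_def sid_def intro!: nth_equalityI dcomp_did_left dcomp_did_right)

lemma sthen_assoc:
  assumes "smor A C \<phi> as bs" "smor A C \<psi> bs cs" "smor A C \<chi> cs ds"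
  shows "sthen A \<phi> (sthen A \<psi> \<chi>) = sthen A (sthen A \<phi> \<psi>) \<chi>"
proof -
  obtain k \<alpha> fs m \<beta> gs l \<gamma> hs where p: "\<phi> = (k, \<alpha>, fs)" "\<psi> = (m, \<beta>, gs)" "\<chi> = (l, \<gamma>, hs)"
    by (cases \<phi>, cases \<psi>, cases \<chi>) auto
  have "\<forall>x\<in>set \<gamma>. x < length \<beta>"
    using assms unfolding p smor_def by (auto simp: in_set_conv_nth)
  moreover have "dcomp A (dcomp A (hs ! i) (gs ! (\<gamma> ! i))) (fs ! (\<beta> ! (\<gamma> ! i))) =
        dcomp A (hs ! i) (dcomp A (gs ! (\<gamma> ! i)) (fs ! (\<beta> ! (\<gamma> ! i))))" if "i < length ds" for i
    using assms that unfolding p smor_def by (intro dcomp_assoc[symmetric]) auto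
  ultimately show ?thesis
    using assms unfolding p smor_def by (auto intro!: nth_equalityI)
qed

lemma cid_cmor: "cobj A n \<Delta> \<Longrightarrow> cmor A C (cid A \<Delta>) \<Delta> \<Delta>"
  by (auto simp: cmor_def cid_def cobj_def intro!: sid_smor)

lemma cthen_cmor: "cmor A C \<eta> \<Delta>' \<Delta> \<Longrightarrow> cmor A C \<theta> \<Delta> \<Gamma> \<Longrightarrow> cmor A C (cthen A \<eta> \<theta>) \<Delta>' \<Gamma>"
  by (auto simp: cmor_def cthen_def intro: sthen_smor)

lemma cthen_cid_left: "cmor A C \<eta> \<Delta>' \<Delta> \<Longrightarrow> cthen A (cid A \<Delta>') \<eta> = \<eta>"
  by (auto simp: cmor_def cthen_def cid_def intro!: nth_equalityI sthen_sid_left)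

lemma cthen_cid_right: "cmor A C \<eta> \<Delta>' \<Delta> \<Longrightarrow> cthen A \<eta> (cid A \<Delta>) = \<eta>"
  by (auto simp: cmor_def cthen_def cid_def intro!: nth_equalityI sthen_sid_right)

lemma cthen_append_interchange:
  assumes "cmor A C \<theta> \<Delta>' \<Delta>" and "smor A C \<phi> bs as"
  shows "cthen A (cid A \<Delta>' @ [\<phi>]) (\<theta> @ [sid A as]) = \<theta> @ [\<phi>]"
    and "cthen A (\<theta> @ [sid A bs]) (cid A \<Delta> @ [\<phi>]) = \<theta> @ [\<phi>]"
  using cmor_length[OF assms(1)] cthen_cid_left[OF assms(1)] cthen_cid_right[OF assms(1)]
    sthen_sid_right[OF assms(2)] sthen_sid_left[OF assms(2)]
  by (simp_all add: cthen_append cid_def)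

lemma cthen_assoc:
  "cmor A C \<eta> \<Delta>1 \<Delta>2 \<Longrightarrow> cmor A C \<theta> \<Delta>2 \<Delta>3 \<Longrightarrow> cmor A C \<zeta> \<Delta>3 \<Delta>4 \<Longrightarrow>
   cthen A \<eta> (cthen A \<theta> \<zeta>) = cthen A (cthen A \<eta> \<theta>) \<zeta>"
  by (auto simp: cmor_def cthen_def intro!: nth_equalityI sthen_assoc)

end

section \<open>Derivations and their actions\<close>

lemma lastidx_less: "x \<in> set xs \<Longrightarrow> lastidx xs x < length xs"
proof -
  assume "x \<in> set xs"
  then obtain k where "k < length xs" "xs ! k = x"
    by (auto simp: in_set_conv_nth)
  then show ?thesis
    unfolding lastidx_def
    using GreatestI_nat[where P = "\<lambda>i. i < length xs \<and> xs ! i = x" and k = k and b = "length xs"]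
    by auto
qed

inductive_cases deriv_VarE: "deriv A C xs p \<Delta> (Var x) a"
inductive_cases deriv_LamE: "deriv A C xs p \<Delta> (Lam x M) a"
inductive_cases deriv_AppE: "deriv A C xs p \<Delta> (App M N) a"

lemma deriv_dvctx_dvty: "deriv A C xs p \<Delta> M a \<Longrightarrow> dvctx p = \<Delta> \<and> dvty p = a"
  by (induction rule: deriv.induct) auto

lemma deriv_cobj_dobj: "deriv A C xs p \<Delta> M a \<Longrightarrow> cobj A (length xs) \<Delta> \<and> dobj A a"
  by (induction rule: deriv.induct) (auto simp: cobj_def sobj_def)

lemma map_dvctx_derivs:
  assumes "length ps = length as" "length \<Gamma>s = length as"
    and "\<forall>i<length as. deriv A C xs (ps ! i) (\<Gamma>s ! i) N (as ! i)"
  shows "map dvctx ps = \<Gamma>s"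
proof (rule nth_equalityI)
  fix i
  assume "i < length (map dvctx ps)"
  then have "deriv A C xs (ps ! i) (\<Gamma>s ! i) N (as ! i)"
    using assms by simp
  then show "map dvctx ps ! i = \<Gamma>s ! i"
    using deriv_dvctx_dvty \<open>i < length (map dvctx ps)\<close> by fastforce
qed (use assms in simp)

lemma deriv_DAppI:
  assumes "deriv A C xs p0 (dvctx p0) M (Arr as a)" "length ps = length as"
    and "\<forall>i<length as. deriv A C xs (ps ! i) (dvctx (ps ! i)) N (as ! i)"
    and "cobj A (length xs) \<Delta>" "cmor A C \<eta> \<Delta> (ctensor (length xs) (dvctx p0 # map dvctx ps))"
  shows "deriv A C xs (DApp \<Delta> a p0 ps \<eta>) \<Delta> (App M N) a"
  using assms by (intro deriv_App[where \<Gamma>s = "map dvctx ps"]) auto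

lemma deriv_DAppE:
  assumes "deriv A C xs (DApp \<Delta>' a' p0 ps \<eta>) \<Delta> (App M N) a"
  obtains as where "\<Delta>' = \<Delta>" "a' = a" "deriv A C xs p0 (dvctx p0) M (Arr as a)" "dvty p0 = Arr as a"
    "length ps = length as"
    "\<forall>i<length as. deriv A C xs (ps ! i) (dvctx (ps ! i)) N (as ! i) \<and> dvty (ps ! i) = as ! i"
    "cobj A (length xs) \<Delta>" "cmor A C \<eta> \<Delta> (ctensor (length xs) (dvctx p0 # map dvctx ps))"
proof -
  from assms obtain \<Gamma>0 as \<Gamma>s where d: "\<Delta>' = \<Delta>" "a' = a" "deriv A C xs p0 \<Gamma>0 M (Arr as a)"
    "length ps = length as" "length \<Gamma>s = length as"
    "\<forall>i<length as. deriv A C xs (ps ! i) (\<Gamma>s ! i) N (as ! i)"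
    "cobj A (length xs) \<Delta>" "cmor A C \<eta> \<Delta> (ctensor (length xs) (\<Gamma>0 # \<Gamma>s))"
    by (rule deriv_AppE) auto
  moreover have "map dvctx ps = \<Gamma>s"
    using d(4-6) by (rule map_dvctx_derivs)
  moreover have "\<forall>i<length as. dvctx (ps ! i) = \<Gamma>s ! i \<and> dvty (ps ! i) = as ! i"
    using d(6) deriv_dvctx_dvty by blast
  ultimately show ?thesis
    using that deriv_dvctx_dvty[OF d(3)] by auto
qed

lemma deriv_App_DApp: "deriv A C xs P \<Delta> (App M N) a \<Longrightarrow> \<exists>p0 ps \<eta>. P = DApp \<Delta> a p0 ps \<eta>"
  by (erule deriv_AppE) auto

lemma dvctx_ract [simp]: "dvctx (ract A \<Gamma> \<eta> p) = \<Gamma>"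
  and dvty_ract [simp]: "dvty (ract A \<Gamma> \<eta> p) = dvty p"
  and dvctx_lact [simp]: "dvctx (lact A f b p) = dvctx p"
  and dvty_lact [simp]: "dvty (lact A f b p) = b"
  by (cases p; auto split: ty.splits tm.splits)+

context type_category
begin

lemma ract_deriv:
  "deriv A C xs p \<Delta> M a \<Longrightarrow> cmor A C \<eta> \<Delta>' \<Delta> \<Longrightarrow> deriv A C xs (ract A \<Delta>' \<eta> p) \<Delta>' M a"
proof (induction arbitrary: \<Delta>' \<eta> rule: deriv.induct)
  case (deriv_Var xs \<Delta> a x i hs)
  then have l: "length \<Delta> = length xs" "length \<eta> = length xs" "length \<Delta>' = length xs"
    using cmor_length by (fastforce simp: cobj_def)+
  show ?case
    unfolding ract.simps
  proof (rule deriv.deriv_Var)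
    show "\<forall>j<length xs. smor A C (map2 (sthen A) \<eta> hs ! j) (\<Delta>' ! j) (if j = i then [a] else [])"
      using deriv_Var l by (auto intro!: sthen_smor dest: cmor_nth)
  qed (use deriv_Var l cmor_cobj in auto)
next
  case (deriv_Abs xs x p \<Delta> as M b)
  then have "cmor A C (\<eta> @ [sid A as]) (\<Delta>' @ [as]) (\<Delta> @ [as])"
    using deriv_cobj_dobj by (fastforce simp: cobj_def intro!: cmor_append sid_smor)
  then show ?case
    using deriv_Abs by (auto intro!: deriv.deriv_Abs)
next
  case (deriv_App xs p0 \<Gamma>0 M as a ps \<Gamma>s N \<Delta> \<theta>)
  then have "cobj A (length xs) \<Delta>'"
    using cmor_cobj by blast
  then show ?case
    unfolding ract.simps using deriv_App by (intro deriv.deriv_App) (auto intro: cthen_cmor)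
qed

lemma lact_deriv:
  "deriv A C xs p \<Delta> M a \<Longrightarrow> dmor A C f a b \<Longrightarrow> deriv A C xs (lact A f b p) \<Delta> M b"
proof (induction arbitrary: f b rule: deriv.induct)
  case (deriv_Var xs \<Delta> a x i hs)
  have i: "i < length xs"
    using deriv_Var(3,4) lastidx_less by simp
  have "smor A C (hs ! i) (\<Delta> ! i) [a]"
    using deriv_Var(6) i by auto
  then have upd: "smor A C (sthen A (hs ! i) (1, [0], [f])) (\<Delta> ! i) [b]"
    using smor_singleton[OF deriv_Var.prems] by (rule sthen_smor)
  show ?case
    unfolding lact.simps
  proof (intro deriv.deriv_Var)
    show "\<forall>j<length xs. smor A C (hs[i := sthen A (hs ! i) (1, [0], [f])] ! j) (\<Delta> ! j)
        (if j = i then [b] else [])"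
      using deriv_Var i upd by auto
  qed (use deriv_Var dmor_dobj in auto)
next
  case (deriv_Abs xs x p \<Delta> as M b0)
  from deriv_Abs.prems obtain k \<alpha> gs g0 bs b' where g: "f = ArrM k \<alpha> gs g0" "b = Arr bs b'"
    "smor A C (k, \<alpha>, gs) bs as" "dmor A C g0 b0 b'"
    by (elim dmor_ArrE) (auto simp: smor_def)
  moreover have "cobj A (length xs) \<Delta>"
    using deriv_cobj_dobj[OF deriv_Abs.hyps] by (auto simp: cobj_def)
  ultimately have "cmor A C (cid A \<Delta> @ [(k, \<alpha>, gs)]) (\<Delta> @ [bs]) (\<Delta> @ [as])"
    by (intro cmor_append cid_cmor)
  then show ?case
    unfolding g lact.simps using deriv_Abs g by (auto intro!: deriv.deriv_Abs ract_deriv)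
next
  case (deriv_App xs p0 \<Gamma>0 M as a ps \<Gamma>s N \<Delta> \<eta>)
  have "sobj A as"
    using deriv_cobj_dobj[OF deriv_App.hyps(1)] by (simp add: sobj_def)
  then have "dmor A C (ArrM (length as) [0..<length as] (map (did A) as) f) (Arr as a) (Arr as b)"
    using deriv_App by (intro dmor_Arr) (auto simp: inC_upt sobj_def intro!: did_dmor)
  then show ?case
    using deriv_App deriv_dvctx_dvty[OF deriv_App.hyps(1)] by (auto intro!: deriv.deriv_App)
qed

lemma ract_cid: "deriv A C xs p \<Delta> M a \<Longrightarrow> ract A \<Delta> (cid A \<Delta>) p = p"
proof (induction rule: deriv.induct)
  case (deriv_Var xs \<Delta> a x i hs)
  then have "length \<Delta> = length xs"
    by (simp add: cobj_def)
  then show ?case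
    using deriv_Var by (auto simp: cid_def intro!: nth_equalityI sthen_sid_left)
qed (simp_all add: cid_append cthen_cid_left)

lemma lact_did: "deriv A C xs p \<Delta> M a \<Longrightarrow> lact A (did A a) a p = p"
proof (induction rule: deriv.induct)
  case (deriv_Var xs \<Delta> a x i hs)
  then have "i < length xs"
    using lastidx_less by simp
  then have "smor A C (hs ! i) (\<Delta> ! i) [a]"
    using deriv_Var(6) by auto
  then have "sthen A (hs ! i) (1, [0], [did A a]) = hs ! i"
    using sthen_sid_right by (fastforce simp: sid_def)
  then show ?case
    by simp
next
  case (deriv_Abs xs x p \<Delta> as M b)
  then show ?case
    using ract_cid[OF deriv_Abs.hyps] by (simp add: cid_append sid_def)
next
  case (deriv_App xs p0 \<Gamma>0 M as a ps \<Gamma>s N \<Delta> \<eta>)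
  then show ?case
    using deriv_dvctx_dvty[OF deriv_App.hyps(1)] by simp
qed

lemma ract_cthen:
  "deriv A C xs p \<Delta> M a \<Longrightarrow> cmor A C \<theta> \<Delta>'' \<Delta> \<Longrightarrow> cmor A C \<theta>' \<Delta>' \<Delta>'' \<Longrightarrow>
   ract A \<Delta>' \<theta>' (ract A \<Delta>'' \<theta> p) = ract A \<Delta>' (cthen A \<theta>' \<theta>) p"
proof (induction arbitrary: \<Delta>' \<Delta>'' \<theta> \<theta>' rule: deriv.induct)
  case (deriv_Var xs \<Delta> a x i hs)
  have l: "length \<Delta> = length xs" "length \<theta> = length xs" "length \<theta>' = length xs"
    "length \<Delta>'' = length xs" "length \<Delta>' = length xs"
    using deriv_Var cmor_length by (fastforce simp: cobj_def)+
  have "sthen A (\<theta>' ! j) (sthen A (\<theta> ! j) (hs ! j)) = sthen A (sthen A (\<theta>' ! j) (\<theta> ! j)) (hs ! j)"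
    if j: "j < length xs" for j
  proof (rule sthen_assoc)
    show "smor A C (\<theta>' ! j) (\<Delta>' ! j) (\<Delta>'' ! j)" "smor A C (\<theta> ! j) (\<Delta>'' ! j) (\<Delta> ! j)"
      using cmor_nth[OF deriv_Var.prems(2)] cmor_nth[OF deriv_Var.prems(1)] l j by auto
    show "smor A C (hs ! j) (\<Delta> ! j) (if j = i then [a] else [])"
      using deriv_Var.hyps(6) j by simp
  qed
  then show ?case
    using l deriv_Var by (auto simp: cthen_def intro!: nth_equalityI)
next
  case (deriv_Abs xs x p \<Delta> as M b)
  have s: "smor A C (sid A as) as as"
    using deriv_cobj_dobj[OF deriv_Abs.hyps] by (auto simp: cobj_def intro: sid_smor)
  have "cthen A (\<theta>' @ [sid A as]) (\<theta> @ [sid A as]) = cthen A \<theta>' \<theta> @ [sid A as]"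
    using cmor_length[OF deriv_Abs.prems(1)] cmor_length[OF deriv_Abs.prems(2)] sthen_sid_left[OF s]
    by (simp add: cthen_append)
  then show ?case
    using deriv_Abs.IH[OF cmor_append[OF deriv_Abs.prems(1) s] cmor_append[OF deriv_Abs.prems(2) s]]
    by simp
next
  case (deriv_App xs p0 \<Gamma>0 M as a ps \<Gamma>s N \<Delta> \<eta>)
  then show ?case
    by (simp add: cthen_assoc)
qed

lemma lact_ract:
  "deriv A C xs p \<Delta> M a \<Longrightarrow> cmor A C \<theta> \<Delta>' \<Delta> \<Longrightarrow> dmor A C g a b \<Longrightarrow>
   lact A g b (ract A \<Delta>' \<theta> p) = ract A \<Delta>' \<theta> (lact A g b p)"
proof (induction arbitrary: \<Delta>' \<theta> g b rule: deriv.induct)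
  case (deriv_Var xs \<Delta> a x i hs)
  have i: "i < length xs"
    using deriv_Var(3,4) lastidx_less by simp
  have l: "length \<Delta> = length xs" "length \<theta> = length xs" "length \<Delta>' = length xs"
    using deriv_Var cmor_length by (fastforce simp: cobj_def)+
  have "sthen A (sthen A (\<theta> ! i) (hs ! i)) (1, [0], [g]) = sthen A (\<theta> ! i) (sthen A (hs ! i) (1, [0], [g]))"
  proof (rule sthen_assoc[symmetric])
    show "smor A C (\<theta> ! i) (\<Delta>' ! i) (\<Delta> ! i)"
      using cmor_nth[OF deriv_Var.prems(1)] i l by simp
    show "smor A C (hs ! i) (\<Delta> ! i) [a]"
      using deriv_Var(6) i by auto
    show "smor A C (1, [0], [g]) [a] [b]"
      using deriv_Var.prems(2) by (rule smor_singleton)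
  qed
  then show ?case
    using l i deriv_Var(5) by (auto intro!: nth_equalityI simp: nth_list_update)
next
  case (deriv_Abs xs x p \<Delta> as M b0)
  from deriv_Abs.prems(2) obtain k \<alpha> gs g0 bs b' where g: "g = ArrM k \<alpha> gs g0" "b = Arr bs b'"
    "smor A C (k, \<alpha>, gs) bs as" "dmor A C g0 b0 b'"
    by (elim dmor_ArrE) (auto simp: smor_def)
  have sobj: "sobj A as" "sobj A bs"
    using smor_sobj[OF g(3)] by auto
  have cD: "cobj A (length xs) \<Delta>"
    using deriv_cobj_dobj[OF deriv_Abs.hyps] by (auto simp: cobj_def)
  then have cD': "cobj A (length xs) \<Delta>'"
    by (rule cmor_cobj[OF deriv_Abs.prems(1)])
  have p1: "deriv A C (xs @ [x]) (lact A g0 b' p) (\<Delta> @ [as]) M b'"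
    using deriv_Abs.hyps g(4) by (rule lact_deriv)
  have c1: "cmor A C (\<theta> @ [sid A as]) (\<Delta>' @ [as]) (\<Delta> @ [as])"
    and c2: "cmor A C (cid A \<Delta>' @ [(k, \<alpha>, gs)]) (\<Delta>' @ [bs]) (\<Delta>' @ [as])"
    and c3: "cmor A C (cid A \<Delta> @ [(k, \<alpha>, gs)]) (\<Delta> @ [bs]) (\<Delta> @ [as])"
    and c4: "cmor A C (\<theta> @ [sid A bs]) (\<Delta>' @ [bs]) (\<Delta> @ [bs])"
    using deriv_Abs.prems(1) g(3) sobj cD cD' by (auto intro!: cmor_append sid_smor cid_cmor)
  \<comment> \<open>The two actions on the new variable commute by the interchange law.\<close>
  have "lact A g b (ract A \<Delta>' \<theta> (DAbs \<Delta> (Arr as b0) p)) =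
      DAbs \<Delta>' b (ract A (\<Delta>' @ [bs]) (cid A \<Delta>' @ [(k, \<alpha>, gs)])
        (lact A g0 b' (ract A (\<Delta>' @ [as]) (\<theta> @ [sid A as]) p)))"
    by (simp add: g)
  also have "\<dots> = DAbs \<Delta>' b (ract A (\<Delta>' @ [bs]) (cid A \<Delta>' @ [(k, \<alpha>, gs)])
        (ract A (\<Delta>' @ [as]) (\<theta> @ [sid A as]) (lact A g0 b' p)))"
    using deriv_Abs.IH[OF c1 g(4)] by simp
  also have "\<dots> = DAbs \<Delta>' b (ract A (\<Delta>' @ [bs]) (\<theta> @ [(k, \<alpha>, gs)]) (lact A g0 b' p))"
    using ract_cthen[OF p1 c1 c2] cthen_append_interchange(1)[OF deriv_Abs.prems(1) g(3)] by simp
  also have "\<dots> = DAbs \<Delta>' b (ract A (\<Delta>' @ [bs]) (\<theta> @ [sid A bs])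
        (ract A (\<Delta> @ [bs]) (cid A \<Delta> @ [(k, \<alpha>, gs)]) (lact A g0 b' p)))"
    using ract_cthen[OF p1 c3 c4] cthen_append_interchange(2)[OF deriv_Abs.prems(1) g(3)] by simp
  also have "\<dots> = ract A \<Delta>' \<theta> (lact A g b (DAbs \<Delta> (Arr as b0) p))"
    by (simp add: g)
  finally show ?case .
next
  case (deriv_App xs p0 \<Gamma>0 M as a ps \<Gamma>s N \<Delta> \<eta>)
  then show ?case
    using deriv_dvctx_dvty[OF deriv_App.hyps(1)] by simp
qed

end

section \<open>Derivations as representatives of the denotation\<close>

definition sem_car where "sem_car A C xs M = fst (sem A C xs M)"
definition sem_rel where "sem_rel A C xs M = fst (snd (sem A C xs M))"
definition sem_act where "sem_act A C xs M = snd (snd (sem A C xs M))"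

abbreviation sem_gen where
  "sem_gen A C xs M N \<equiv> appgen A C (length xs) (sem_car A C xs M) (sem_rel A C xs M)
     (sem_act A C xs M) (sem_car A C xs N) (sem_rel A C xs N) (sem_act A C xs N)"

lemma sem_car_Var: "sem_car A C xs (Var x) \<Delta> a =
    {EMor hs | hs. cmor A C hs \<Delta> (map (\<lambda>j. if j = lastidx xs x then [a] else []) [0..<length xs])}"
  and sem_rel_Var: "sem_rel A C xs (Var x) \<Delta> a = Id_on (sem_car A C xs (Var x) \<Delta> a)"
  and sem_act_Var: "sem_act A C xs (Var x) \<eta> f (EMor hs) =
    EMor (map (\<lambda>j. if j = lastidx xs x then sthen A (sthen A (\<eta> ! j) (hs ! j)) (1, [0], [f])
                  else sthen A (\<eta> ! j) (hs ! j)) [0..<length xs])"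
  by (simp_all add: sem_car_def sem_rel_def sem_act_def Let_def)

lemma sem_car_Lam: "sem_car A C xs (Lam x M) \<Delta> a =
    (case a of Arr as b \<Rightarrow> sem_car A C (xs @ [x]) M (\<Delta> @ [as]) b | At _ \<Rightarrow> {})"
  and sem_rel_Lam: "sem_rel A C xs (Lam x M) \<Delta> a =
    (case a of Arr as b \<Rightarrow> sem_rel A C (xs @ [x]) M (\<Delta> @ [as]) b | At _ \<Rightarrow> {})"
  and sem_act_Lam: "sem_act A C xs (Lam x M) \<eta> (ArrM k \<alpha> gs g) e =
    sem_act A C (xs @ [x]) M (\<eta> @ [(k, \<alpha>, gs)]) g e"
  by (simp_all add: sem_car_def sem_rel_def sem_act_def case_prod_beta split: ty.split)

lemma sem_car_App: "sem_car A C xs (App M N) = appcar A C (length xs) (sem_car A C xs M) (sem_car A C xs N)"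
  and sem_rel_App: "sem_rel A C xs (App M N) \<Delta> a =
    Restr ((sem_gen A C xs M N \<Delta> a \<union> (sem_gen A C xs M N \<Delta> a)\<inverse>)\<^sup>*)
      (appcar A C (length xs) (sem_car A C xs M) (sem_car A C xs N) \<Delta> a)"
  and sem_act_App: "sem_act A C xs (App M N) = appact A (sem_act A C xs M)"
  by (simp_all add: sem_car_def sem_rel_def sem_act_def case_prod_beta split: ty.split)

lemma equiv_Restr_rtrancl_symcl: "equiv S (Restr ((G \<union> G\<inverse>)\<^sup>*) S)"
proof -
  have "sym ((G \<union> G\<inverse>)\<^sup>*)"
    by (simp add: sym_Un_converse sym_rtrancl)
  then show ?thesis
    by (auto simp: equiv_def refl_on_def sym_def trans_def)
qed

lemma sem_rel_equiv: "equiv (sem_car A C xs M \<Delta> a) (sem_rel A C xs M \<Delta> a)"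
proof (induction M arbitrary: xs \<Delta> a)
  case (Var x)
  then show ?case
    by (auto simp: sem_rel_Var equiv_def refl_on_def sym_def trans_def)
next
  case (Lam x M)
  then show ?case
    by (cases a) (auto simp: sem_car_Lam sem_rel_Lam equiv_def refl_on_def)
next
  case (App M N)
  show ?case
    unfolding sem_rel_App sem_car_App by (rule equiv_Restr_rtrancl_symcl)
qed

lemma appgen_subset: "appgen A C n cM rM tM cN rN tN \<Delta> a \<subseteq>
    appcar A C n cM cN \<Delta> a \<times> appcar A C n cM cN \<Delta> a"
  unfolding appgen_def by auto

lemma sem_gen_sem_rel:
  "(e, e') \<in> sem_gen A C xs M N \<Delta> a \<Longrightarrow> (e, e') \<in> sem_rel A C xs (App M N) \<Delta> a"
  unfolding sem_rel_App using appgen_subset by blast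

text \<open>The \<open>At\<close> branch is junk: the function premise of an App node has an arrow type.\<close>
fun dv_el :: "('o, 'm) dv \<Rightarrow> ('o, 'm) el" where
  "dv_el (DVar \<Delta> a i hs) = EMor hs"
| "dv_el (DAbs \<Delta> a p) = dv_el p"
| "dv_el (DApp \<Delta> a p0 ps \<eta>) =
    EApp (case dvty p0 of Arr as _ \<Rightarrow> as | At _ \<Rightarrow> []) (dvctx p0 # map dvctx ps)
      (dv_el p0) (map dv_el ps) \<eta>"

lemma dv_el_sem_car: "deriv A C xs p \<Delta> M a \<Longrightarrow> dv_el p \<in> sem_car A C xs M \<Delta> a"
proof (induction rule: deriv.induct)
  case (deriv_Var xs \<Delta> a x i hs)
  then have "cmor A C hs \<Delta> (map (\<lambda>j. if j = lastidx xs x then [a] else []) [0..<length xs])"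
    by (auto simp: cmor_def cobj_def)
  then show ?case
    by (simp add: sem_car_Var)
next
  case (deriv_Abs xs x p \<Delta> as M b)
  then show ?case
    by (simp add: sem_car_Lam)
next
  case (deriv_App xs p0 \<Gamma>0 M as a ps \<Gamma>s N \<Delta> \<eta>)
  have ps: "\<forall>i<length as. deriv A C xs (ps ! i) (\<Gamma>s ! i) N (as ! i)"
    and els: "\<forall>i<length as. dv_el (ps ! i) \<in> sem_car A C xs N (\<Gamma>s ! i) (as ! i)"
    using deriv_App.IH(2) by simp_all
  have ctx: "dvctx p0 = \<Gamma>0" "dvty p0 = Arr as a" "map dvctx ps = \<Gamma>s"
    using deriv_dvctx_dvty[OF deriv_App.hyps(1)] map_dvctx_derivs[OF deriv_App.hyps(2,3) ps]
    by simp_all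
  have "cobj A (length xs) \<Gamma>" if "\<Gamma> \<in> set (\<Gamma>0 # \<Gamma>s)" for \<Gamma>
  proof -
    from that consider "\<Gamma> = \<Gamma>0" | i where "i < length as" "\<Gamma> = \<Gamma>s ! i"
      using deriv_App.hyps(3) by (auto simp: in_set_conv_nth)
    then show ?thesis
    proof cases
      case (2 i)
      then show ?thesis
        using ps deriv_cobj_dobj[of A C xs "ps ! i" "\<Gamma>s ! i" N "as ! i"] by simp
    qed (use deriv_cobj_dobj[OF deriv_App.hyps(1)] in simp)
  qed
  moreover have "sobj A as"
    using deriv_cobj_dobj[OF deriv_App.hyps(1)] by (auto simp: sobj_def)
  ultimately show ?case
    unfolding sem_car_App appcar_def dv_el.simps ctx mem_Collect_eq
    using deriv_App.IH(1) deriv_App.hyps(2,3,5) els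
    by (intro exI[of _ as] exI[of _ "\<Gamma>0 # \<Gamma>s"] exI[of _ "dv_el p0"] exI[of _ "map dv_el ps"]
        exI[of _ \<eta>]) simp
qed

lemma dv_el_onto_sem_car:
  "FV M \<subseteq> set xs \<Longrightarrow> cobj A (length xs) \<Delta> \<Longrightarrow> dobj A a \<Longrightarrow> e \<in> sem_car A C xs M \<Delta> a \<Longrightarrow>
   \<exists>p. deriv A C xs p \<Delta> M a \<and> dv_el p = e"
proof (induction M arbitrary: xs \<Delta> a e)
  case (Var x)
  from Var.prems(4) obtain hs where e: "e = EMor hs"
    and hs: "cmor A C hs \<Delta> (map (\<lambda>j. if j = lastidx xs x then [a] else []) [0..<length xs])"
    by (auto simp: sem_car_Var)
  have "length hs = length xs" "length \<Delta> = length xs"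
    using hs Var.prems(2) by (auto simp: cmor_def cobj_def)
  then have "deriv A C xs (DVar \<Delta> a (lastidx xs x) hs) \<Delta> (Var x) a"
    using Var.prems cmor_nth[OF hs] by (intro deriv_Var) auto
  then show ?case
    using e by auto
next
  case (Lam x M)
  then obtain as b where a: "a = Arr as b"
    by (cases a) (auto simp: sem_car_Lam)
  have "cobj A (length (xs @ [x])) (\<Delta> @ [as])" "dobj A b" "FV M \<subseteq> set (xs @ [x])"
    "e \<in> sem_car A C (xs @ [x]) M (\<Delta> @ [as]) b"
    using Lam.prems a by (auto simp: cobj_def sobj_def sem_car_Lam)
  then obtain p where "deriv A C (xs @ [x]) p (\<Delta> @ [as]) M b" "dv_el p = e"
    using Lam.IH by blast
  then show ?case
    using a by (auto intro!: deriv_Abs)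
next
  case (App M N)
  from App.prems(4) obtain as \<Gamma>s u vs \<theta> where e: "e = EApp as \<Gamma>s u vs \<theta>" "sobj A as"
    "length \<Gamma>s = Suc (length as)" "\<forall>\<Gamma>\<in>set \<Gamma>s. cobj A (length xs) \<Gamma>"
    "u \<in> sem_car A C xs M (hd \<Gamma>s) (Arr as a)" "length vs = length as"
    "\<forall>i<length as. vs ! i \<in> sem_car A C xs N (\<Gamma>s ! Suc i) (as ! i)"
    "cmor A C \<theta> \<Delta> (ctensor (length xs) \<Gamma>s)"
    unfolding sem_car_App appcar_def by blast
  obtain \<Gamma>0 \<Gamma>s' where \<Gamma>s: "\<Gamma>s = \<Gamma>0 # \<Gamma>s'"
    using e(3) by (cases \<Gamma>s) auto
  obtain p0 where p0: "deriv A C xs p0 \<Gamma>0 M (Arr as a)" "dv_el p0 = u"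
    using App.IH(1)[of xs \<Gamma>0 "Arr as a" u] App.prems e \<Gamma>s by (auto simp: sobj_def)
  have "\<forall>i<length as. \<exists>p. deriv A C xs p (\<Gamma>s' ! i) N (as ! i) \<and> dv_el p = vs ! i"
    using App.IH(2) App.prems e \<Gamma>s by (auto simp: sobj_def)
  then obtain pf where pf: "\<forall>i<length as. deriv A C xs (pf i) (\<Gamma>s' ! i) N (as ! i) \<and> dv_el (pf i) = vs ! i"
    by metis
  define ps where "ps = map pf [0..<length as]"
  have "deriv A C xs (DApp \<Delta> a p0 ps \<theta>) \<Delta> (App M N) a"
    using p0 pf App.prems(2) e(3,8) \<Gamma>s by (intro deriv_App) (auto simp: ps_def)
  moreover have "map dvctx ps = \<Gamma>s'"
    using pf e(3) \<Gamma>s by (intro map_dvctx_derivs[of _ as]) (auto simp: ps_def)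
  moreover have "map dv_el ps = vs"
    using pf e(6) by (auto simp: ps_def intro!: nth_equalityI)
  ultimately show ?case
    using e(1) p0 \<Gamma>s deriv_dvctx_dvty[OF p0(1)] by auto
qed

lemma dv_el_inj:
  "deriv A C xs p \<Delta> M a \<Longrightarrow> deriv A C xs q \<Delta> M a \<Longrightarrow> dv_el p = dv_el q \<Longrightarrow> p = q"
proof (induction arbitrary: q rule: deriv.induct)
  case (deriv_Var xs \<Delta> a x i hs)
  from deriv_Var.prems(1) obtain hs' where "q = DVar \<Delta> a (lastidx xs x) hs'"
    by (rule deriv_VarE) simp
  then show ?case
    using deriv_Var.prems(2) deriv_Var.hyps(4) by simp
next
  case (deriv_Abs xs x p \<Delta> as M b)
  from deriv_Abs.prems(1) obtain q' where "q = DAbs \<Delta> (Arr as b) q'"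
    "deriv A C (xs @ [x]) q' (\<Delta> @ [as]) M b"
    by (rule deriv_LamE) simp
  then show ?case
    using deriv_Abs.IH deriv_Abs.prems(2) by simp
next
  case (deriv_App xs p0 \<Gamma>0 M as a ps \<Gamma>s N \<Delta> \<eta>)
  obtain q0 qs \<eta>' where q0: "q = DApp \<Delta> a q0 qs \<eta>'"
    using deriv_App_DApp[OF deriv_App.prems(1)] by blast
  then obtain as' where q: "q = DApp \<Delta> a q0 qs \<eta>'"
    "deriv A C xs q0 (dvctx q0) M (Arr as' a)" "length qs = length as'"
    "\<forall>i<length as'. deriv A C xs (qs ! i) (dvctx (qs ! i)) N (as' ! i)"
    using deriv_App.prems(1)[unfolded q0] by (elim deriv_DAppE) auto
  have ps: "\<forall>i<length as. deriv A C xs (ps ! i) (\<Gamma>s ! i) N (as ! i)"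
    using deriv_App.IH(2) by simp
  have p0: "dvctx p0 = \<Gamma>0" "dvty p0 = Arr as a" "map dvctx ps = \<Gamma>s"
    using deriv_dvctx_dvty[OF deriv_App.hyps(1)] map_dvctx_derivs[OF deriv_App.hyps(2,3) ps]
    by simp_all
  have e: "as' = as" "dvctx q0 = \<Gamma>0" "map dvctx qs = \<Gamma>s" "dv_el q0 = dv_el p0"
    "map dv_el qs = map dv_el ps" "\<eta>' = \<eta>"
    using deriv_App.prems(2) q(1) p0 deriv_dvctx_dvty[OF q(2)] by simp_all
  have "p0 = q0"
    using deriv_App.IH(1) q(2) e by simp
  moreover have "ps = qs"
  proof (rule nth_equalityI)
    show "length ps = length qs"
      using deriv_App.hyps(2) q(3) e(1) by simp
    fix i
    assume i: "i < length ps"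
    then have "dvctx (qs ! i) = \<Gamma>s ! i" "dv_el (qs ! i) = dv_el (ps ! i)"
      using \<open>length ps = length qs\<close> e(3,5) by (metis nth_map)+
    moreover have "deriv A C xs (qs ! i) (dvctx (qs ! i)) N (as ! i)"
      using q(4) e(1) i deriv_App.hyps(2) by simp
    ultimately show "ps ! i = qs ! i"
      using deriv_App.IH(2) i deriv_App.hyps(2) by simp
  qed
  ultimately show ?case
    using q(1) e(6) by simp
qed

context type_category
begin

lemma dv_el_sem_act:
  "deriv A C xs p \<Delta> M a \<Longrightarrow> cmor A C \<eta> \<Delta>' \<Delta> \<Longrightarrow> dmor A C f a a' \<Longrightarrow>
   sem_act A C xs M \<eta> f (dv_el p) = dv_el (lact A f a' (ract A \<Delta>' \<eta> p))"
proof (induction arbitrary: \<Delta>' \<eta> f a' rule: deriv.induct)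
  case (deriv_Var xs \<Delta> a x i hs)
  have "length \<eta> = length xs" "i < length xs"
    using deriv_Var cmor_length lastidx_less by (fastforce simp: cobj_def)+
  then show ?case
    using deriv_Var.hyps(4,5) by (auto simp: sem_act_Var intro!: nth_equalityI)
next
  case (deriv_Abs xs x p \<Delta> as M b)
  from deriv_Abs.prems(2) obtain k \<alpha> gs g0 bs b' where g: "f = ArrM k \<alpha> gs g0" "a' = Arr bs b'"
    "smor A C (k, \<alpha>, gs) bs as" "dmor A C g0 b b'"
    by (elim dmor_ArrE) (auto simp: smor_def)
  have cD: "cobj A (length xs) \<Delta>"
    using deriv_cobj_dobj[OF deriv_Abs.hyps] by (auto simp: cobj_def)
  then have cD': "cobj A (length xs) \<Delta>'"
    by (rule cmor_cobj[OF deriv_Abs.prems(1)])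
  have p1: "deriv A C (xs @ [x]) (lact A g0 b' p) (\<Delta> @ [as]) M b'"
    using deriv_Abs.hyps g(4) by (rule lact_deriv)
  have c1: "cmor A C (\<eta> @ [sid A as]) (\<Delta>' @ [as]) (\<Delta> @ [as])"
    and c2: "cmor A C (cid A \<Delta>' @ [(k, \<alpha>, gs)]) (\<Delta>' @ [bs]) (\<Delta>' @ [as])"
    and c5: "cmor A C (\<eta> @ [(k, \<alpha>, gs)]) (\<Delta>' @ [bs]) (\<Delta> @ [as])"
    using deriv_Abs.prems(1) g(3) smor_sobj[OF g(3)] cD'
    by (auto intro!: cmor_append sid_smor cid_cmor)
  have "lact A f a' (ract A \<Delta>' \<eta> (DAbs \<Delta> (Arr as b) p)) =
      DAbs \<Delta>' a' (lact A g0 b' (ract A (\<Delta>' @ [bs]) (\<eta> @ [(k, \<alpha>, gs)]) p))"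
    using lact_ract[OF deriv_Abs.hyps c1 g(4)] ract_cthen[OF p1 c1 c2]
      cthen_append_interchange(1)[OF deriv_Abs.prems(1) g(3)] lact_ract[OF deriv_Abs.hyps c5 g(4)]
    by (simp add: g)
  then show ?case
    using deriv_Abs.IH[OF c5 g(4)] by (simp add: g sem_act_Lam)
next
  case (deriv_App xs p0 \<Gamma>0 M as a ps \<Gamma>s N \<Delta> \<theta>)
  have p0: "dvctx p0 = \<Gamma>0" "dvty p0 = Arr as a"
    using deriv_dvctx_dvty[OF deriv_App.hyps(1)] by simp_all
  have "cobj A (length xs) \<Gamma>0" "sobj A as"
    using deriv_cobj_dobj[OF deriv_App.hyps(1)] by (auto simp: sobj_def)
  then have "dmor A C (ArrM (length as) [0..<length as] (map (did A) as) f) (Arr as a) (Arr as a')"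
    "cmor A C (cid A \<Gamma>0) \<Gamma>0 \<Gamma>0"
    using deriv_App.prems(2) by (auto intro!: dmor_Arr did_dmor cid_cmor simp: inC_upt sobj_def)
  then show ?case
    using deriv_App.IH(1) ract_cid[OF deriv_App.hyps(1)] p0
    by (simp add: sem_act_App appact_def)
qed

lemma dv_el_ract:
  "deriv A C xs p \<Gamma>' M b \<Longrightarrow> cmor A C \<theta> \<Gamma> \<Gamma>' \<Longrightarrow>
   sem_act A C xs M \<theta> (did A b) (dv_el p) = dv_el (ract A \<Gamma> \<theta> p)"
  using dv_el_sem_act did_dmor deriv_cobj_dobj lact_did ract_deriv by metis

lemma dv_el_lact:
  "deriv A C xs p \<Gamma> M b \<Longrightarrow> dmor A C f b b' \<Longrightarrow>
   sem_act A C xs M (cid A \<Gamma>) f (dv_el p) = dv_el (lact A f b' p)"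
  using dv_el_sem_act cid_cmor deriv_cobj_dobj ract_cid by metis

end

section \<open>Congruent derivations have identified representatives\<close>

lemma nth_Cons_map_Suc: "length xs = Suc n \<Longrightarrow> xs ! 0 # map (\<lambda>i. xs ! Suc i) [0..<n] = xs"
  by (cases xs) (auto intro: nth_equalityI)

lemma dcong_deriv: "dcong A C xs M p q \<Longrightarrow> \<exists>\<Delta> a. deriv A C xs p \<Delta> M a \<and> deriv A C xs q \<Delta> M a"
proof (induction rule: dcong.induct)
  case (dcong_trans xs M p q r)
  then show ?case
    using deriv_dvctx_dvty by metis
qed blast+

lemma dcong_dvctx_dvty: "dcong A C xs M p q \<Longrightarrow> dvctx q = dvctx p \<and> dvty q = dvty p"
  using dcong_deriv deriv_dvctx_dvty by metis

lemma sem_gen_factors: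
  assumes dP: "deriv A C xs (DApp \<Delta> a p0 ps \<eta>) \<Delta> (App M N) a"
    and dQ: "deriv A C xs (DApp \<Delta> a q0 qs \<eta>) \<Delta> (App M N) a"
    and same: "dvctx q0 = dvctx p0" "dvty q0 = dvty p0" "map dvctx qs = map dvctx ps"
    and r0: "(dv_el p0, dv_el q0) \<in> sem_rel A C xs M (dvctx p0) (dvty p0)"
    and ri: "\<forall>i<length ps. (dv_el (ps ! i), dv_el (qs ! i)) \<in> sem_rel A C xs N (dvctx (ps ! i)) (dvty (ps ! i))"
  shows "(dv_el (DApp \<Delta> a p0 ps \<eta>), dv_el (DApp \<Delta> a q0 qs \<eta>)) \<in> sem_gen A C xs M N \<Delta> a"
proof -
  obtain as where p0: "dvty p0 = Arr as a" "length ps = length as"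
    "\<forall>i<length as. dvty (ps ! i) = as ! i"
    using dP by (elim deriv_DAppE) auto
  have lq: "length qs = length ps"
    using same(3) map_eq_imp_length_eq by blast
  let ?G = "dvctx p0 # map dvctx ps"
  show ?thesis
    unfolding appgen_def
  proof (intro CollectI case_prodI conjI disjI1)
    show "dv_el (DApp \<Delta> a p0 ps \<eta>) \<in> appcar A C (length xs) (sem_car A C xs M) (sem_car A C xs N) \<Delta> a"
      "dv_el (DApp \<Delta> a q0 qs \<eta>) \<in> appcar A C (length xs) (sem_car A C xs M) (sem_car A C xs N) \<Delta> a"
      using dv_el_sem_car[OF dP] dv_el_sem_car[OF dQ] by (simp_all add: sem_car_App)
    show "\<exists>as \<Gamma>s u vs u' vs' \<theta>. dv_el (DApp \<Delta> a p0 ps \<eta>) = EApp as \<Gamma>s u vs \<theta> \<and>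
        dv_el (DApp \<Delta> a q0 qs \<eta>) = EApp as \<Gamma>s u' vs' \<theta> \<and>
        (u, u') \<in> sem_rel A C xs M (hd \<Gamma>s) (Arr as a) \<and> length vs' = length vs \<and>
        (\<forall>i<length vs. (vs ! i, vs' ! i) \<in> sem_rel A C xs N (\<Gamma>s ! Suc i) (as ! i))"
    proof (intro exI conjI)
      show "dv_el (DApp \<Delta> a p0 ps \<eta>) = EApp as ?G (dv_el p0) (map dv_el ps) \<eta>"
        "dv_el (DApp \<Delta> a q0 qs \<eta>) = EApp as ?G (dv_el q0) (map dv_el qs) \<eta>"
        using p0(1) same by simp_all
      show "(dv_el p0, dv_el q0) \<in> sem_rel A C xs M (hd ?G) (Arr as a)"
        using r0 p0(1) by simp
      show "length (map dv_el qs) = length (map dv_el ps)"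
        using lq by simp
      show "\<forall>i<length (map dv_el ps). (map dv_el ps ! i, map dv_el qs ! i) \<in> sem_rel A C xs N (?G ! Suc i) (as ! i)"
        using ri p0(2,3) lq by auto
    qed
  qed
qed

context type_category
begin

lemma dv_el_dinat_ctx:
  assumes p0: "deriv A C xs p0 (dvctx p0) M (Arr as a)" and lp: "length ps = length as"
    and ps: "\<forall>i<length as. deriv A C xs (ps ! i) (dvctx (ps ! i)) N (as ! i)"
    and l: "length \<theta>s = Suc (length ps)" "length \<Gamma>s = length \<theta>s"
    and \<theta>s: "\<forall>j<length \<theta>s. cmor A C (\<theta>s ! j) (\<Gamma>s ! j) ((dvctx p0 # map dvctx ps) ! j)"
  shows "dv_el (DApp \<Delta> a (ract A (\<Gamma>s ! 0) (\<theta>s ! 0) p0)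
      (map (\<lambda>i. ract A (\<Gamma>s ! Suc i) (\<theta>s ! Suc i) (ps ! i)) [0..<length ps]) \<eta>) =
    EApp as \<Gamma>s (sem_act A C xs M (hd \<theta>s) (did A (Arr as a)) (dv_el p0))
      (map (\<lambda>i. sem_act A C xs N (\<theta>s ! Suc i) (did A (as ! i)) (dv_el (ps ! i))) [0..<length as]) \<eta>"
proof -
  have "cmor A C (\<theta>s ! 0) (\<Gamma>s ! 0) (dvctx p0)"
    using \<theta>s[rule_format, of 0] l by simp
  moreover have "hd \<theta>s = \<theta>s ! 0"
    using l by (cases \<theta>s) auto
  ultimately have "sem_act A C xs M (hd \<theta>s) (did A (Arr as a)) (dv_el p0) =
      dv_el (ract A (\<Gamma>s ! 0) (\<theta>s ! 0) p0)"
    using dv_el_ract[OF p0] by simp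
  moreover have "sem_act A C xs N (\<theta>s ! Suc i) (did A (as ! i)) (dv_el (ps ! i)) =
      dv_el (ract A (\<Gamma>s ! Suc i) (\<theta>s ! Suc i) (ps ! i))" if "i < length as" for i
  proof (rule dv_el_ract)
    show "deriv A C xs (ps ! i) (dvctx (ps ! i)) N (as ! i)"
      using ps that by simp
    show "cmor A C (\<theta>s ! Suc i) (\<Gamma>s ! Suc i) (dvctx (ps ! i))"
      using \<theta>s[rule_format, of "Suc i"] l lp that by simp
  qed
  moreover have "\<Gamma>s ! 0 # map (\<lambda>i. \<Gamma>s ! Suc i) [0..<length ps] = \<Gamma>s"
    using l by (simp add: nth_Cons_map_Suc)
  ultimately show ?thesis
    using deriv_dvctx_dvty[OF p0] lp by (simp add: comp_def)
qed

lemma sem_gen_dinat_ctx: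
  assumes l: "length \<theta>s = Suc (length ps)" "length \<Gamma>s = length \<theta>s"
    and \<theta>s: "\<forall>j<length \<theta>s. cmor A C (\<theta>s ! j) (\<Gamma>s ! j) ((dvctx p0 # map dvctx ps) ! j)"
    and dL: "deriv A C xs (DApp \<Delta> a (ract A (\<Gamma>s ! 0) (\<theta>s ! 0) p0)
      (map (\<lambda>i. ract A (\<Gamma>s ! Suc i) (\<theta>s ! Suc i) (ps ! i)) [0..<length ps]) \<eta>) \<Delta> (App M N) a"
    (is "deriv A C xs ?L \<Delta> (App M N) a")
    and dR: "deriv A C xs (DApp \<Delta> a p0 ps (cthen A \<eta> (cmtensor (length xs) \<theta>s))) \<Delta> (App M N) a"
    (is "deriv A C xs ?R \<Delta> (App M N) a")
  shows "(dv_el ?L, dv_el ?R) \<in> sem_gen A C xs M N \<Delta> a"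
proof -
  obtain as where p0: "deriv A C xs p0 (dvctx p0) M (Arr as a)" "dvty p0 = Arr as a"
    "length ps = length as" "\<forall>i<length as. deriv A C xs (ps ! i) (dvctx (ps ! i)) N (as ! i)"
    using dR by (elim deriv_DAppE) auto
  show ?thesis
    unfolding appgen_def
  proof (intro CollectI case_prodI conjI disjI2[OF disjI1])
    show "dv_el ?L \<in> appcar A C (length xs) (sem_car A C xs M) (sem_car A C xs N) \<Delta> a"
      "dv_el ?R \<in> appcar A C (length xs) (sem_car A C xs M) (sem_car A C xs N) \<Delta> a"
      using dv_el_sem_car[OF dL] dv_el_sem_car[OF dR] by (simp_all add: sem_car_App)
    show "\<exists>as \<Gamma>s \<Gamma>s' \<theta>s u vs \<eta>'. length \<theta>s = length \<Gamma>s \<and> length \<Gamma>s' = length \<Gamma>s \<and>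
        (\<forall>j<length \<Gamma>s. cmor A C (\<theta>s ! j) (\<Gamma>s ! j) (\<Gamma>s' ! j)) \<and>
        dv_el ?L = EApp as \<Gamma>s (sem_act A C xs M (hd \<theta>s) (did A (Arr as a)) u)
          (map (\<lambda>i. sem_act A C xs N (\<theta>s ! Suc i) (did A (as ! i)) (vs ! i)) [0..<length as]) \<eta>' \<and>
        dv_el ?R = EApp as \<Gamma>s' u vs (cthen A \<eta>' (cmtensor (length xs) \<theta>s))"
      using dv_el_dinat_ctx[OF p0(1,3,4) l \<theta>s] l \<theta>s p0(2,3)
      by (intro exI[of _ as] exI[of _ \<Gamma>s] exI[of _ "dvctx p0 # map dvctx ps"] exI[of _ \<theta>s]
          exI[of _ "dv_el p0"] exI[of _ "map dv_el ps"] exI[of _ \<eta>]) simp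
  qed
qed

lemma dv_el_dinat_args:
  assumes s: "smor A C (k, \<alpha>, fs) as bs" and p0: "deriv A C xs p0 (dvctx p0) M (Arr bs a)"
    and qs: "length qs = length as" "\<forall>i<length as. deriv A C xs (qs ! i) (dvctx (qs ! i)) N (as ! i)"
  shows "dv_el (DApp \<Delta> a p0 (map (\<lambda>j. lact A (fs ! j) (bs ! j) (qs ! (\<alpha> ! j))) [0..<length bs]) \<eta>) =
      EApp bs (dvctx p0 # map (\<lambda>j. dvctx (qs ! (\<alpha> ! j))) [0..<length bs]) (dv_el p0)
        (map (\<lambda>j. sem_act A C xs N (cid A (dvctx (qs ! (\<alpha> ! j)))) (fs ! j) (dv_el (qs ! (\<alpha> ! j))))
          [0..<length bs]) \<eta>"
    and "dv_el (DApp \<Delta> a (lact A (ArrM k \<alpha> fs (did A a)) (Arr as a) p0) qs \<eta>') =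
      EApp as (dvctx p0 # map dvctx qs)
        (sem_act A C xs M (cid A (dvctx p0)) (ArrM k \<alpha> fs (did A a)) (dv_el p0)) (map dv_el qs) \<eta>'"
proof -
  have "dv_el (lact A (fs ! j) (bs ! j) (qs ! (\<alpha> ! j))) =
      sem_act A C xs N (cid A (dvctx (qs ! (\<alpha> ! j)))) (fs ! j) (dv_el (qs ! (\<alpha> ! j)))"
    if "j < length bs" for j
  proof (rule dv_el_lact[symmetric])
    show "deriv A C xs (qs ! (\<alpha> ! j)) (dvctx (qs ! (\<alpha> ! j))) N (as ! (\<alpha> ! j))"
      "dmor A C (fs ! j) (as ! (\<alpha> ! j)) (bs ! j)"
      using s qs that by (auto simp: smor_def)
  qed
  then show "dv_el (DApp \<Delta> a p0 (map (\<lambda>j. lact A (fs ! j) (bs ! j) (qs ! (\<alpha> ! j))) [0..<length bs]) \<eta>) =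
      EApp bs (dvctx p0 # map (\<lambda>j. dvctx (qs ! (\<alpha> ! j))) [0..<length bs]) (dv_el p0)
        (map (\<lambda>j. sem_act A C xs N (cid A (dvctx (qs ! (\<alpha> ! j)))) (fs ! j) (dv_el (qs ! (\<alpha> ! j))))
          [0..<length bs]) \<eta>"
    using deriv_dvctx_dvty[OF p0] by simp
  have "dmor A C (ArrM k \<alpha> fs (did A a)) (Arr bs a) (Arr as a)"
    using s deriv_cobj_dobj[OF p0] by (auto intro!: dmor_Arr did_dmor simp: smor_def)
  then show "dv_el (DApp \<Delta> a (lact A (ArrM k \<alpha> fs (did A a)) (Arr as a) p0) qs \<eta>') =
      EApp as (dvctx p0 # map dvctx qs)
        (sem_act A C xs M (cid A (dvctx p0)) (ArrM k \<alpha> fs (did A a)) (dv_el p0)) (map dv_el qs) \<eta>'"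
    using dv_el_lact[OF p0] by simp
qed

lemma sem_gen_dinat_args:
  assumes s: "smor A C (k, \<alpha>, fs) as bs"
    and dL: "deriv A C xs (DApp \<Delta> a p0 (map (\<lambda>j. lact A (fs ! j) (bs ! j) (ps ! (\<alpha> ! j))) [0..<length bs])
      (cthen A \<eta> (cmtensor (length xs) [cid A (dvctx p0), astar A (length xs) (map dvctx ps) \<alpha>])))
      \<Delta> (App M N) a"
    (is "deriv A C xs ?L \<Delta> (App M N) a")
    and dR: "deriv A C xs (DApp \<Delta> a (lact A (ArrM k \<alpha> fs (did A a)) (Arr as a) p0) ps \<eta>) \<Delta> (App M N) a"
    (is "deriv A C xs ?R \<Delta> (App M N) a")
  shows "(dv_el ?L, dv_el ?R) \<in> sem_gen A C xs M N \<Delta> a"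
proof -
  obtain bs' where p0: "deriv A C xs p0 (dvctx p0) M (Arr bs' a)" "length bs = length bs'"
    "\<forall>i<length bs'. dvty (lact A (fs ! i) (bs ! i) (ps ! (\<alpha> ! i))) = bs' ! i"
    using dL by (elim deriv_DAppE) auto
  then have "bs' = bs"
    by (simp add: list_eq_iff_nth_eq)
  with p0(1) have p0': "deriv A C xs p0 (dvctx p0) M (Arr bs a)"
    by simp
  obtain ps: "length ps = length as" "\<forall>i<length as. deriv A C xs (ps ! i) (dvctx (ps ! i)) N (as ! i)"
    using dR by (elim deriv_DAppE) auto
  have "\<alpha> ! j < length ps" if "j < length bs" for j
    using s ps(1) that by (auto simp: smor_def)
  then have "\<exists>\<Gamma>s u vs. dv_el ?L = EApp bs (hd \<Gamma>s # map (\<lambda>j. \<Gamma>s ! Suc (\<alpha> ! j)) [0..<length bs]) u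
        (map (\<lambda>j. sem_act A C xs N (cid A (\<Gamma>s ! Suc (\<alpha> ! j))) (fs ! j) (vs ! (\<alpha> ! j))) [0..<length bs])
        (cthen A \<eta> (cmtensor (length xs) [cid A (hd \<Gamma>s), astar A (length xs) (tl \<Gamma>s) \<alpha>])) \<and>
      dv_el ?R = EApp as \<Gamma>s (sem_act A C xs M (cid A (hd \<Gamma>s)) (ArrM k \<alpha> fs (did A a)) u) vs \<eta>"
    using dv_el_dinat_args[OF s p0' ps]
    by (intro exI[of _ "dvctx p0 # map dvctx ps"] exI[of _ "dv_el p0"] exI[of _ "map dv_el ps"]) simp
  then show ?thesis
    unfolding appgen_def
    using s dv_el_sem_car[OF dL] dv_el_sem_car[OF dR] by (simp add: sem_car_App) blast
qed

lemma dcong_sem_rel: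
  "dcong A C xs M p q \<Longrightarrow> (dv_el p, dv_el q) \<in> sem_rel A C xs M (dvctx p) (dvty p)"
proof (induction rule: dcong.induct)
  case (dcong_refl xs p \<Delta> M a)
  then show ?case
    using dv_el_sem_car[OF dcong_refl] deriv_dvctx_dvty[OF dcong_refl]
    by (simp add: equiv_class_eq_iff[OF sem_rel_equiv])
next
  case (dcong_sym xs M p q)
  then show ?case
    using dcong_dvctx_dvty[OF dcong_sym.hyps] by (auto simp: equiv_class_eq_iff[OF sem_rel_equiv])
next
  case (dcong_trans xs M p q r)
  then show ?case
    using dcong_dvctx_dvty[OF dcong_trans.hyps(1)] by (auto simp: equiv_class_eq_iff[OF sem_rel_equiv])
next
  case (dcong_Abs xs x M p q \<Delta> a)
  from dcong_Abs.hyps(2) obtain as b where a: "a = Arr as b"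
    and p: "deriv A C (xs @ [x]) p (\<Delta> @ [as]) M b"
    by (rule deriv_LamE) auto
  then show ?case
    using dcong_Abs.IH deriv_dvctx_dvty[OF p] by (simp add: sem_rel_Lam)
next
  case (dcong_App xs M p0 q0 qs ps N \<Delta> a \<eta>)
  have "map dvctx qs = map dvctx ps"
  proof (rule nth_equalityI)
    fix i
    assume i: "i < length (map dvctx qs)"
    then have "dcong A C xs N (ps ! i) (qs ! i)"
      using dcong_App.IH(2) dcong_App.hyps(2) by simp
    with i show "map dvctx qs ! i = map dvctx ps ! i"
      using dcong_App.hyps(2) dcong_dvctx_dvty by fastforce
  qed (simp add: dcong_App.hyps(2))
  then show ?case
    using sem_gen_factors[OF dcong_App.hyps(3,4)] dcong_App.IH dcong_dvctx_dvty[OF dcong_App.hyps(1)]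
    by (simp add: sem_gen_sem_rel)
next
  case (dcong_i k \<alpha> fs as bs lhs \<Delta> a p0 ps \<eta> xs rhs M N)
  have "(dv_el lhs, dv_el rhs) \<in> sem_gen A C xs M N \<Delta> a"
    using dcong_i.hyps(4,5) unfolding dcong_i.hyps(2,3) by (rule sem_gen_dinat_args[OF dcong_i.hyps(1)])
  then show ?case
    using deriv_dvctx_dvty[OF dcong_i.hyps(4)] by (simp add: sem_gen_sem_rel)
next
  case (dcong_ii \<theta>s ps \<Gamma>s p0 lhs \<Delta> a \<eta> rhs xs M N)
  have "(dv_el lhs, dv_el rhs) \<in> sem_gen A C xs M N \<Delta> a"
    using dcong_ii.hyps(6,7) unfolding dcong_ii.hyps(4,5)
    by (rule sem_gen_dinat_ctx[OF dcong_ii.hyps(1-3)])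
  then show ?case
    using deriv_dvctx_dvty[OF dcong_ii.hyps(6)] by (simp add: sem_gen_sem_rel)
qed

end

section \<open>Identified representatives come from congruent derivations\<close>

text \<open>A derivation is determined by its representative (\<open>dv_el_inj\<close>), so for each
  generator of the coend relation it suffices to rebuild the two derivations as the two sides
  of the matching congruence rule.\<close>

lemma dcong_of_sem_gen_factors:
  assumes IHM: "\<And>\<Gamma> b p q. deriv A C xs p \<Gamma> M b \<Longrightarrow> deriv A C xs q \<Gamma> M b \<Longrightarrow>
      (dv_el p, dv_el q) \<in> sem_rel A C xs M \<Gamma> b \<Longrightarrow> dcong A C xs M p q"
    and IHN: "\<And>\<Gamma> b p q. deriv A C xs p \<Gamma> N b \<Longrightarrow> deriv A C xs q \<Gamma> N b \<Longrightarrow>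
      (dv_el p, dv_el q) \<in> sem_rel A C xs N \<Gamma> b \<Longrightarrow> dcong A C xs N p q"
    and dP: "deriv A C xs P \<Delta> (App M N) a" and dQ: "deriv A C xs Q \<Delta> (App M N) a"
    and P: "dv_el P = EApp as \<Gamma>s u vs \<theta>" and Q: "dv_el Q = EApp as \<Gamma>s u' vs' \<theta>"
    and u: "(u, u') \<in> sem_rel A C xs M (hd \<Gamma>s) (Arr as a)"
    and vs: "length vs' = length vs" "\<forall>i<length vs. (vs ! i, vs' ! i) \<in> sem_rel A C xs N (\<Gamma>s ! Suc i) (as ! i)"
  shows "dcong A C xs (App M N) P Q"
proof -
  obtain p0 ps \<eta> q0 qs \<eta>' where PQ: "P = DApp \<Delta> a p0 ps \<eta>" "Q = DApp \<Delta> a q0 qs \<eta>'"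
    using deriv_App_DApp[OF dP] deriv_App_DApp[OF dQ] by blast
  obtain asP where p0: "deriv A C xs p0 (dvctx p0) M (Arr asP a)" "dvty p0 = Arr asP a"
    "length ps = length asP"
    "\<forall>i<length asP. deriv A C xs (ps ! i) (dvctx (ps ! i)) N (asP ! i) \<and> dvty (ps ! i) = asP ! i"
    using dP unfolding PQ by (elim deriv_DAppE) auto
  obtain asQ where q0: "deriv A C xs q0 (dvctx q0) M (Arr asQ a)" "dvty q0 = Arr asQ a"
    "length qs = length asQ"
    "\<forall>i<length asQ. deriv A C xs (qs ! i) (dvctx (qs ! i)) N (asQ ! i) \<and> dvty (qs ! i) = asQ ! i"
    using dQ unfolding PQ by (elim deriv_DAppE) auto
  have e: "asP = as" "asQ = as" "dvctx p0 # map dvctx ps = \<Gamma>s" "dvctx q0 # map dvctx qs = \<Gamma>s"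
    "dv_el p0 = u" "dv_el q0 = u'" "map dv_el ps = vs" "map dv_el qs = vs'" "\<eta> = \<theta>" "\<eta>' = \<theta>"
    using P Q p0(2) q0(2) unfolding PQ by auto
  have ctx: "dvctx q0 = dvctx p0" "map dvctx qs = map dvctx ps" "hd \<Gamma>s = dvctx p0"
    using e(3,4) by auto
  have "dcong A C xs M p0 q0"
    using IHM[OF p0(1)] q0(1) u e ctx by simp
  moreover have lq: "length qs = length ps"
    using p0(3) q0(3) e(1,2) by simp
  moreover have "dcong A C xs N (ps ! i) (qs ! i)" if i: "i < length ps" for i
  proof (rule IHN)
    have "dvctx (qs ! i) = dvctx (ps ! i)"
      using ctx(2) i lq by (metis nth_map)
    then show "deriv A C xs (ps ! i) (dvctx (ps ! i)) N (as ! i)"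
      "deriv A C xs (qs ! i) (dvctx (ps ! i)) N (as ! i)"
      using p0(3,4) q0(4) e(1,2) i lq by auto
    have "\<Gamma>s ! Suc i = dvctx (ps ! i)"
      using e(3) i by auto
    then show "(dv_el (ps ! i), dv_el (qs ! i)) \<in> sem_rel A C xs N (dvctx (ps ! i)) (as ! i)"
      using vs e(7,8) i lq by auto
  qed
  ultimately show ?thesis
    using dcong_App dP dQ unfolding PQ e(9,10) by blast
qed

context type_category
begin

lemma deriv_dinat_ctx:
  assumes p0: "deriv A C xs p0 (dvctx p0) M (Arr as a)" and lp: "length ps = length as"
    and ps: "\<forall>i<length as. deriv A C xs (ps ! i) (dvctx (ps ! i)) N (as ! i)"
    and l: "length \<theta>s = Suc (length ps)" "length \<Gamma>s = length \<theta>s"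
    and \<theta>s: "\<forall>j<length \<theta>s. cmor A C (\<theta>s ! j) (\<Gamma>s ! j) ((dvctx p0 # map dvctx ps) ! j)"
    and \<Delta>: "cobj A (length xs) \<Delta>" and \<eta>: "cmor A C \<eta> \<Delta> (ctensor (length xs) \<Gamma>s)"
  shows "deriv A C xs (DApp \<Delta> a (ract A (\<Gamma>s ! 0) (\<theta>s ! 0) p0)
      (map (\<lambda>i. ract A (\<Gamma>s ! Suc i) (\<theta>s ! Suc i) (ps ! i)) [0..<length ps]) \<eta>) \<Delta> (App M N) a"
proof (rule deriv_DAppI)
  have "cmor A C (\<theta>s ! 0) (\<Gamma>s ! 0) (dvctx p0)"
    using \<theta>s[rule_format, of 0] l by simp
  then show "deriv A C xs (ract A (\<Gamma>s ! 0) (\<theta>s ! 0) p0) (dvctx (ract A (\<Gamma>s ! 0) (\<theta>s ! 0) p0)) M (Arr as a)"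
    using ract_deriv[OF p0] by simp
  show "\<forall>i<length as. deriv A C xs (map (\<lambda>i. ract A (\<Gamma>s ! Suc i) (\<theta>s ! Suc i) (ps ! i)) [0..<length ps] ! i)
      (dvctx (map (\<lambda>i. ract A (\<Gamma>s ! Suc i) (\<theta>s ! Suc i) (ps ! i)) [0..<length ps] ! i)) N (as ! i)"
  proof (intro allI impI)
    fix i
    assume i: "i < length as"
    then have "cmor A C (\<theta>s ! Suc i) (\<Gamma>s ! Suc i) (dvctx (ps ! i))"
      using \<theta>s[rule_format, of "Suc i"] l lp by simp
    then show "deriv A C xs (map (\<lambda>i. ract A (\<Gamma>s ! Suc i) (\<theta>s ! Suc i) (ps ! i)) [0..<length ps] ! i)
        (dvctx (map (\<lambda>i. ract A (\<Gamma>s ! Suc i) (\<theta>s ! Suc i) (ps ! i)) [0..<length ps] ! i)) N (as ! i)"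
      using ract_deriv[OF ps[rule_format, OF i]] lp i by simp
  qed
  have "\<Gamma>s ! 0 # map (\<lambda>i. \<Gamma>s ! Suc i) [0..<length ps] = \<Gamma>s"
    using l by (simp add: nth_Cons_map_Suc)
  then show "cmor A C \<eta> \<Delta> (ctensor (length xs) (dvctx (ract A (\<Gamma>s ! 0) (\<theta>s ! 0) p0) #
      map dvctx (map (\<lambda>i. ract A (\<Gamma>s ! Suc i) (\<theta>s ! Suc i) (ps ! i)) [0..<length ps])))"
    using \<eta> by (simp add: comp_def)
qed (use \<Delta> lp in simp_all)

lemma deriv_dinat_args:
  assumes s: "smor A C (k, \<alpha>, fs) as bs" and p0: "deriv A C xs p0 (dvctx p0) M (Arr bs a)"
    and qs: "length qs = length as" "\<forall>i<length as. deriv A C xs (qs ! i) (dvctx (qs ! i)) N (as ! i)"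
    and \<Delta>: "cobj A (length xs) \<Delta>"
    and \<eta>: "cmor A C \<eta> \<Delta> (ctensor (length xs) (dvctx p0 # map (\<lambda>j. dvctx (qs ! (\<alpha> ! j))) [0..<length bs]))"
  shows "deriv A C xs (DApp \<Delta> a p0 (map (\<lambda>j. lact A (fs ! j) (bs ! j) (qs ! (\<alpha> ! j))) [0..<length bs]) \<eta>)
    \<Delta> (App M N) a"
proof (rule deriv_DAppI[OF p0])
  show "\<forall>j<length bs. deriv A C xs (map (\<lambda>j. lact A (fs ! j) (bs ! j) (qs ! (\<alpha> ! j))) [0..<length bs] ! j)
      (dvctx (map (\<lambda>j. lact A (fs ! j) (bs ! j) (qs ! (\<alpha> ! j))) [0..<length bs] ! j)) N (bs ! j)"
  proof (intro allI impI)
    fix j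
    assume j: "j < length bs"
    then have "deriv A C xs (qs ! (\<alpha> ! j)) (dvctx (qs ! (\<alpha> ! j))) N (as ! (\<alpha> ! j))"
      and "dmor A C (fs ! j) (as ! (\<alpha> ! j)) (bs ! j)"
      using s qs(2) by (auto simp: smor_def)
    then show "deriv A C xs (map (\<lambda>j. lact A (fs ! j) (bs ! j) (qs ! (\<alpha> ! j))) [0..<length bs] ! j)
        (dvctx (map (\<lambda>j. lact A (fs ! j) (bs ! j) (qs ! (\<alpha> ! j))) [0..<length bs] ! j)) N (bs ! j)"
      using j by (simp add: lact_deriv)
  qed
qed (use \<Delta> \<eta> in \<open>simp_all add: comp_def\<close>)

lemma dcong_of_sem_gen_dinat_ctx:
  assumes dP: "deriv A C xs P \<Delta> (App M N) a" and dQ: "deriv A C xs Q \<Delta> (App M N) a"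
    and l: "length \<theta>s = length \<Gamma>s" "length \<Gamma>s' = length \<Gamma>s"
    and \<theta>s: "\<forall>j<length \<Gamma>s. cmor A C (\<theta>s ! j) (\<Gamma>s ! j) (\<Gamma>s' ! j)"
    and P: "dv_el P = EApp as \<Gamma>s (sem_act A C xs M (hd \<theta>s) (did A (Arr as a)) u)
      (map (\<lambda>i. sem_act A C xs N (\<theta>s ! Suc i) (did A (as ! i)) (vs ! i)) [0..<length as]) \<eta>"
    and Q: "dv_el Q = EApp as \<Gamma>s' u vs (cthen A \<eta> (cmtensor (length xs) \<theta>s))"
  shows "dcong A C xs (App M N) P Q"
proof -
  obtain p0 ps \<eta>P q0 qs \<eta>Q where PQ: "P = DApp \<Delta> a p0 ps \<eta>P" "Q = DApp \<Delta> a q0 qs \<eta>Q"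
    using deriv_App_DApp[OF dP] deriv_App_DApp[OF dQ] by blast
  obtain asP where p0: "dvty p0 = Arr asP a" "cobj A (length xs) \<Delta>"
    "cmor A C \<eta>P \<Delta> (ctensor (length xs) (dvctx p0 # map dvctx ps))"
    using dP unfolding PQ by (elim deriv_DAppE) auto
  obtain asQ where q0: "deriv A C xs q0 (dvctx q0) M (Arr asQ a)" "dvty q0 = Arr asQ a"
    "length qs = length asQ" "\<forall>i<length asQ. deriv A C xs (qs ! i) (dvctx (qs ! i)) N (asQ ! i)"
    using dQ unfolding PQ by (elim deriv_DAppE) auto
  have e: "asQ = as" "dvctx p0 # map dvctx ps = \<Gamma>s" "\<eta>P = \<eta>" "dvctx q0 # map dvctx qs = \<Gamma>s'"
    "dv_el q0 = u" "map dv_el qs = vs" "\<eta>Q = cthen A \<eta> (cmtensor (length xs) \<theta>s)"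
    using P Q p0(1) q0(2) unfolding PQ by auto
  have lqs: "length \<theta>s = Suc (length qs)" "length \<Gamma>s = length \<theta>s"
    using l e(4) by auto
  have \<theta>s': "\<forall>j<length \<theta>s. cmor A C (\<theta>s ! j) (\<Gamma>s ! j) ((dvctx q0 # map dvctx qs) ! j)"
    using \<theta>s l e(4) by simp
  define L where "L = DApp \<Delta> a (ract A (\<Gamma>s ! 0) (\<theta>s ! 0) q0)
    (map (\<lambda>i. ract A (\<Gamma>s ! Suc i) (\<theta>s ! Suc i) (qs ! i)) [0..<length qs]) \<eta>"
  have dL: "deriv A C xs L \<Delta> (App M N) a"
    unfolding L_def using q0(1,3,4) p0(2,3) e(1-3)
    by (intro deriv_dinat_ctx[OF _ _ _ lqs \<theta>s']) auto
  moreover have "dv_el L = dv_el P"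
    unfolding L_def P e(6)[symmetric]
    using dv_el_dinat_ctx[OF q0(1,3,4)[unfolded e(1)] lqs \<theta>s'] e(5) q0(3) e(1) by simp
  ultimately have "L = P"
    using dv_el_inj[OF dL dP] by simp
  moreover have "dcong A C xs (App M N) L Q"
    unfolding PQ(2) e(7) L_def
    by (rule dcong_ii[OF lqs \<theta>s' refl refl]) (use dL dQ PQ e(7) L_def in simp_all)
  ultimately show ?thesis
    by simp
qed

lemma dcong_of_sem_gen_dinat_args:
  assumes dP: "deriv A C xs P \<Delta> (App M N) a" and dQ: "deriv A C xs Q \<Delta> (App M N) a"
    and s: "smor A C (k, \<alpha>, fs) as bs"
    and P: "dv_el P = EApp bs (hd \<Gamma>s # map (\<lambda>j. \<Gamma>s ! Suc (\<alpha> ! j)) [0..<length bs]) u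
      (map (\<lambda>j. sem_act A C xs N (cid A (\<Gamma>s ! Suc (\<alpha> ! j))) (fs ! j) (vs ! (\<alpha> ! j))) [0..<length bs])
      (cthen A \<eta> (cmtensor (length xs) [cid A (hd \<Gamma>s), astar A (length xs) (tl \<Gamma>s) \<alpha>]))"
    and Q: "dv_el Q = EApp as \<Gamma>s (sem_act A C xs M (cid A (hd \<Gamma>s)) (ArrM k \<alpha> fs (did A a)) u) vs \<eta>"
  shows "dcong A C xs (App M N) P Q"
proof -
  obtain p0 ps \<eta>P q0 qs \<eta>Q where PQ: "P = DApp \<Delta> a p0 ps \<eta>P" "Q = DApp \<Delta> a q0 qs \<eta>Q"
    using deriv_App_DApp[OF dP] deriv_App_DApp[OF dQ] by blast
  obtain bs' where p0: "deriv A C xs p0 (dvctx p0) M (Arr bs' a)" "dvty p0 = Arr bs' a"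
    "cobj A (length xs) \<Delta>" "cmor A C \<eta>P \<Delta> (ctensor (length xs) (dvctx p0 # map dvctx ps))"
    using dP unfolding PQ by (elim deriv_DAppE) auto
  obtain as' where q0: "dvty q0 = Arr as' a" "length qs = length as'"
    "\<forall>i<length as'. deriv A C xs (qs ! i) (dvctx (qs ! i)) N (as' ! i)"
    "cmor A C \<eta>Q \<Delta> (ctensor (length xs) (dvctx q0 # map dvctx qs))"
    using dQ unfolding PQ by (elim deriv_DAppE) auto
  have e: "bs' = bs" "dvctx p0 = hd \<Gamma>s" "map dvctx ps = map (\<lambda>j. \<Gamma>s ! Suc (\<alpha> ! j)) [0..<length bs]"
    "dv_el p0 = u"
    "map dv_el ps = map (\<lambda>j. sem_act A C xs N (cid A (\<Gamma>s ! Suc (\<alpha> ! j))) (fs ! j) (vs ! (\<alpha> ! j))) [0..<length bs]"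
    "\<eta>P = cthen A \<eta> (cmtensor (length xs) [cid A (hd \<Gamma>s), astar A (length xs) (tl \<Gamma>s) \<alpha>])"
    "as' = as" "dvctx q0 # map dvctx qs = \<Gamma>s"
    "dv_el q0 = sem_act A C xs M (cid A (hd \<Gamma>s)) (ArrM k \<alpha> fs (did A a)) u"
    "map dv_el qs = vs" "\<eta>Q = \<eta>"
    using P Q p0(2) q0(1) unfolding PQ by auto
  have \<alpha>: "\<forall>j<length bs. \<alpha> ! j < length as \<and> dmor A C (fs ! j) (as ! (\<alpha> ! j)) (bs ! j)"
    using s by (auto simp: smor_def)
  have p0': "deriv A C xs p0 (dvctx p0) M (Arr bs a)"
    and qs: "length qs = length as" "\<forall>i<length as. deriv A C xs (qs ! i) (dvctx (qs ! i)) N (as ! i)"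
    and \<Gamma>s: "\<Gamma>s = dvctx p0 # map dvctx qs" "dvctx q0 = dvctx p0"
    using p0(1) q0(2,3) e by auto
  have ctx: "map (\<lambda>j. \<Gamma>s ! Suc (\<alpha> ! j)) [0..<length bs] = map (\<lambda>j. dvctx (qs ! (\<alpha> ! j))) [0..<length bs]"
    using \<Gamma>s \<alpha> qs(1) by simp
  have ps: "map dvctx ps = map (\<lambda>j. dvctx (qs ! (\<alpha> ! j))) [0..<length bs]"
    and \<eta>P: "\<eta>P = cthen A \<eta> (cmtensor (length xs) [cid A (dvctx p0), astar A (length xs) (map dvctx qs) \<alpha>])"
    using e(3,6) ctx \<Gamma>s by simp_all
  define L where "L = DApp \<Delta> a p0 (map (\<lambda>j. lact A (fs ! j) (bs ! j) (qs ! (\<alpha> ! j))) [0..<length bs])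
    (cthen A \<eta> (cmtensor (length xs) [cid A (dvctx p0), astar A (length xs) (map dvctx qs) \<alpha>]))"
  define R where "R = DApp \<Delta> a (lact A (ArrM k \<alpha> fs (did A a)) (Arr as a) p0) qs \<eta>"
  have "deriv A C xs L \<Delta> (App M N) a"
    unfolding L_def using p0(3,4) ps \<eta>P by (intro deriv_dinat_args[OF s p0' qs]) (simp_all add: comp_def)
  moreover have "dv_el L = dv_el P"
    unfolding L_def PQ(1) dv_el_dinat_args(1)[OF s p0' qs]
    using e(1,3-5) e(10)[symmetric] \<eta>P p0(2) ctx \<Gamma>s \<alpha> qs(1) by simp
  ultimately have "L = P"
    using dv_el_inj[OF _ dP] by blast
  have F: "dmor A C (ArrM k \<alpha> fs (did A a)) (Arr bs a) (Arr as a)"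
    using s deriv_cobj_dobj[OF dP] by (auto intro!: dmor_Arr did_dmor simp: smor_def)
  have "deriv A C xs R \<Delta> (App M N) a"
    unfolding R_def using lact_deriv[OF p0' F] qs p0(3) q0(4) e(11) \<Gamma>s(2) by (intro deriv_DAppI) auto
  moreover have "dv_el R = dv_el Q"
    unfolding R_def PQ(2) dv_el_dinat_args(2)[OF s p0' qs] using e(4,7,9-11) \<Gamma>s q0(1) by simp
  ultimately have "R = Q"
    using dv_el_inj[OF _ dQ] by blast
  have "dcong A C xs (App M N) L R"
    using \<open>deriv A C xs L \<Delta> (App M N) a\<close> \<open>deriv A C xs R \<Delta> (App M N) a\<close>
    unfolding L_def R_def by (rule dcong_i[OF s refl refl])
  then show ?thesis
    using \<open>L = P\<close> \<open>R = Q\<close> by simp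
qed

lemma sem_gen_dcong:
  assumes IHM: "\<And>\<Gamma> b p q. deriv A C xs p \<Gamma> M b \<Longrightarrow> deriv A C xs q \<Gamma> M b \<Longrightarrow>
      (dv_el p, dv_el q) \<in> sem_rel A C xs M \<Gamma> b \<Longrightarrow> dcong A C xs M p q"
    and IHN: "\<And>\<Gamma> b p q. deriv A C xs p \<Gamma> N b \<Longrightarrow> deriv A C xs q \<Gamma> N b \<Longrightarrow>
      (dv_el p, dv_el q) \<in> sem_rel A C xs N \<Gamma> b \<Longrightarrow> dcong A C xs N p q"
    and dP: "deriv A C xs P \<Delta> (App M N) a" and dQ: "deriv A C xs Q \<Delta> (App M N) a"
    and gen: "(dv_el P, dv_el Q) \<in> sem_gen A C xs M N \<Delta> a"
  shows "dcong A C xs (App M N) P Q"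
  using gen unfolding appgen_def mem_Collect_eq prod.case
  by (elim conjE disjE exE)
    (rule dcong_of_sem_gen_factors[OF IHM IHN dP dQ] dcong_of_sem_gen_dinat_ctx[OF dP dQ]
      dcong_of_sem_gen_dinat_args[OF dP dQ]; assumption)+

lemma sem_gen_rtrancl_dcong:
  assumes IHM: "\<And>\<Gamma> b p q. deriv A C xs p \<Gamma> M b \<Longrightarrow> deriv A C xs q \<Gamma> M b \<Longrightarrow>
      (dv_el p, dv_el q) \<in> sem_rel A C xs M \<Gamma> b \<Longrightarrow> dcong A C xs M p q"
    and IHN: "\<And>\<Gamma> b p q. deriv A C xs p \<Gamma> N b \<Longrightarrow> deriv A C xs q \<Gamma> N b \<Longrightarrow>
      (dv_el p, dv_el q) \<in> sem_rel A C xs N \<Gamma> b \<Longrightarrow> dcong A C xs N p q"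
    and fv: "FV (App M N) \<subseteq> set xs" and dP: "deriv A C xs P \<Delta> (App M N) a"
    and "(dv_el P, e) \<in> (sem_gen A C xs M N \<Delta> a \<union> (sem_gen A C xs M N \<Delta> a)\<inverse>)\<^sup>*"
  shows "\<exists>Q. deriv A C xs Q \<Delta> (App M N) a \<and> dv_el Q = e \<and> dcong A C xs (App M N) P Q"
  using assms(5)
proof (induction rule: rtrancl_induct)
  case base
  show ?case
    using dP dcong_refl[OF dP] by blast
next
  case (step y z)
  let ?G = "sem_gen A C xs M N \<Delta> a"
  obtain Qy where Qy: "deriv A C xs Qy \<Delta> (App M N) a" "dv_el Qy = y" "dcong A C xs (App M N) P Qy"
    using step.IH by blast
  have "z \<in> sem_car A C xs (App M N) \<Delta> a"
    using step.hyps(2) appgen_subset unfolding sem_car_App by blast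
  then obtain Qz where Qz: "deriv A C xs Qz \<Delta> (App M N) a" "dv_el Qz = z"
    using dv_el_onto_sem_car[OF fv] deriv_cobj_dobj[OF dP] by blast
  from step.hyps(2) have "dcong A C xs (App M N) Qy Qz"
  proof
    assume "(y, z) \<in> ?G"
    then show ?thesis
      using sem_gen_dcong[OF IHM IHN Qy(1) Qz(1)] Qy(2) Qz(2) by simp
  next
    assume "(y, z) \<in> ?G\<inverse>"
    then have "dcong A C xs (App M N) Qz Qy"
      using sem_gen_dcong[OF IHM IHN Qz(1) Qy(1)] Qy(2) Qz(2) by simp
    then show ?thesis
      by (rule dcong_sym)
  qed
  then show ?case
    using Qz dcong_trans[OF Qy(3)] by blast
qed

lemma sem_rel_dcong:
  "FV M \<subseteq> set xs \<Longrightarrow> deriv A C xs p \<Delta> M a \<Longrightarrow> deriv A C xs q \<Delta> M a \<Longrightarrow>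
   (dv_el p, dv_el q) \<in> sem_rel A C xs M \<Delta> a \<Longrightarrow> dcong A C xs M p q"
proof (induction M arbitrary: xs \<Delta> a p q)
  case (Var x)
  have "dv_el p = dv_el q"
    using Var.prems(4) by (simp add: sem_rel_Var Id_on_iff)
  then have "p = q"
    by (rule dv_el_inj[OF Var.prems(2,3)])
  then show ?case
    using dcong_refl[OF Var.prems(2)] by simp
next
  case (Lam x M)
  from Lam.prems(2) obtain as b p' where p: "a = Arr as b" "p = DAbs \<Delta> (Arr as b) p'"
    "deriv A C (xs @ [x]) p' (\<Delta> @ [as]) M b"
    by (rule deriv_LamE) auto
  from Lam.prems(3) obtain q' where q: "q = DAbs \<Delta> (Arr as b) q'"
    "deriv A C (xs @ [x]) q' (\<Delta> @ [as]) M b"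
    by (rule deriv_LamE) (use p in auto)
  have "dcong A C (xs @ [x]) M p' q'"
    using Lam.IH[OF _ p(3) q(2)] Lam.prems(1,4) p q by (auto simp: sem_rel_Lam)
  then show ?case
    unfolding p(2) q(1) by (rule dcong_Abs) (use Lam.prems(2,3) p q in simp_all)
next
  case (App M N)
  have "\<exists>Q. deriv A C xs Q \<Delta> (App M N) a \<and> dv_el Q = dv_el q \<and> dcong A C xs (App M N) p Q"
    using App.prems(4) unfolding sem_rel_App
    by (intro sem_gen_rtrancl_dcong App.IH App.prems(1,2)) (use App.prems(1) in auto)
  then obtain Q where "deriv A C xs Q \<Delta> (App M N) a" "dv_el Q = dv_el q" "dcong A C xs (App M N) p Q"
    by blast
  then show ?case
    using dv_el_inj[OF _ App.prems(3)] by blast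
qed

lemma dcong_iff_sem_rel:
  assumes "FV M \<subseteq> set xs" and "deriv A C xs p \<Delta> M a"
  shows "dcong A C xs M p q \<longleftrightarrow> deriv A C xs q \<Delta> M a \<and> (dv_el p, dv_el q) \<in> sem_rel A C xs M \<Delta> a"
proof
  assume pq: "dcong A C xs M p q"
  obtain \<Delta>' a' where "deriv A C xs p \<Delta>' M a'" "deriv A C xs q \<Delta>' M a'"
    using dcong_deriv[OF pq] by blast
  then have "deriv A C xs q \<Delta> M a"
    using deriv_dvctx_dvty[OF assms(2)] deriv_dvctx_dvty by metis
  then show "deriv A C xs q \<Delta> M a \<and> (dv_el p, dv_el q) \<in> sem_rel A C xs M \<Delta> a"
    using dcong_sem_rel[OF pq] deriv_dvctx_dvty[OF assms(2)] by simp
next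
  assume "deriv A C xs q \<Delta> M a \<and> (dv_el p, dv_el q) \<in> sem_rel A C xs M \<Delta> a"
  then show "dcong A C xs M p q"
    using sem_rel_dcong[OF assms] by blast
qed

end

section \<open>Preimages of quotients\<close>

lemma bij_betw_preimage_quotient:
  assumes "equiv S R" and "f ` P = S"
    and "\<And>p. p \<in> P \<Longrightarrow> {q. E p q} = {q \<in> P. (f p, f q) \<in> R}"
  shows "bij_betw (\<lambda>X. {p \<in> P. f p \<in> X}) (S // R) (P // {(p, q). E p q})"
proof -
  have preimage: "{q \<in> P. f q \<in> R `` {f p}} = {(p, q). E p q} `` {p}" if "p \<in> P" for p
    using assms(3)[OF that] by auto
  show ?thesis
  proof (rule bij_betw_imageI)
    show "inj_on (\<lambda>X. {p \<in> P. f p \<in> X}) (S // R)"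
    proof (rule inj_onI, elim quotientE)
      fix X Y x y
      assume eq: "{p \<in> P. f p \<in> X} = {p \<in> P. f p \<in> Y}" and X: "X = R `` {x}" "x \<in> S"
        and Y: "Y = R `` {y}" "y \<in> S"
      obtain p q where "p \<in> P" "f p = x" "q \<in> P" "f q = y"
        using X(2) Y(2) assms(2) by blast
      then have "p \<in> {p \<in> P. f p \<in> X}"
        using X equiv_class_self[OF assms(1)] by blast
      then have "(y, x) \<in> R"
        using eq Y \<open>f p = x\<close> by blast
      then show "X = Y"
        using X Y equiv_class_eq[OF assms(1)] by blast
    qed
    have "S // R = (\<lambda>p. R `` {f p}) ` P"
      unfolding quotient_def assms(2)[symmetric] by auto
    then have "(\<lambda>X. {p \<in> P. f p \<in> X}) ` (S // R) = (\<lambda>p. {q \<in> P. f q \<in> R `` {f p}}) ` P"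
      by (simp add: image_image)
    also have "\<dots> = (\<lambda>p. {(p, q). E p q} `` {p}) ` P"
      using preimage by (rule image_cong[OF refl])
    also have "\<dots> = P // {(p, q). E p q}"
      unfolding quotient_def by blast
    finally show "(\<lambda>X. {p \<in> P. f p \<in> X}) ` (S // R) = P // {(p, q). E p q}" .
  qed
qed

lemma preimage_UN_Image_eq:
  assumes "X \<subseteq> f ` P"
    and "\<And>p. p \<in> P \<Longrightarrow> L p \<in> P' \<and> t (f p) = f' (L p)"
    and "\<And>p'. p' \<in> P' \<Longrightarrow> {q. E' p' q} = {q \<in> P'. (f' p', f' q) \<in> R'}"
  shows "{q \<in> P'. f' q \<in> (\<Union>e\<in>X. R' `` {t e})} = (\<Union>p\<in>{p \<in> P. f p \<in> X}. {q. E' (L p) q})"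
proof (intro set_eqI iffI)
  fix q
  assume "q \<in> {q \<in> P'. f' q \<in> (\<Union>e\<in>X. R' `` {t e})}"
  then obtain p where "p \<in> P" "f p \<in> X" "q \<in> P'" "(t (f p), f' q) \<in> R'"
    using assms(1) by blast
  then show "q \<in> (\<Union>p\<in>{p \<in> P. f p \<in> X}. {q. E' (L p) q})"
    using assms(2,3) by fastforce
next
  fix q
  assume "q \<in> (\<Union>p\<in>{p \<in> P. f p \<in> X}. {q. E' (L p) q})"
  then obtain p where "p \<in> P" "f p \<in> X" "q \<in> {q. E' (L p) q}"
    by blast
  then show "q \<in> {q \<in> P'. f' q \<in> (\<Union>e\<in>X. R' `` {t e})}"
    using assms(2,3) by fastforce
qed

lemma dv_el_image:
  "FV M \<subseteq> set xs \<Longrightarrow> cobj A (length xs) \<Delta> \<Longrightarrow> dobj A a \<Longrightarrow>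
   dv_el ` {p. deriv A C xs p \<Delta> M a} = sem_car A C xs M \<Delta> a"
  using dv_el_onto_sem_car dv_el_sem_car by blast

lemma DQ_eq: "DQ A C xs M \<Delta> a = sem_car A C xs M \<Delta> a // sem_rel A C xs M \<Delta> a"
  by (simp add: DQ_def sem_car_def sem_rel_def)

lemma DQact_eq:
  "DQact A C xs M \<Delta>' a' \<eta> f X = (\<Union>e\<in>X. sem_rel A C xs M \<Delta>' a' `` {sem_act A C xs M \<eta> f e})"
  by (simp add: DQact_def sem_rel_def sem_act_def)

theorem theorem3:
  fixes A :: "('o,'m) cat" and C :: cls and M :: "'v lterm" and xs :: "'v list"
  assumes "is_cat A" and "distinct xs" and "FV M \<subseteq> set xs"
  shows "\<exists>\<Phi>.
    (\<forall>\<Delta> a. cobj A (length xs) \<Delta> \<longrightarrow> dobj A a \<longrightarrow>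
        bij_betw (\<Phi> \<Delta> a) (DQ A C xs M \<Delta> a) (TQ A C xs M \<Delta> a)) \<and>
    (\<forall>\<Delta> \<Delta>' a a' \<eta> f. cobj A (length xs) \<Delta> \<longrightarrow> cobj A (length xs) \<Delta>' \<longrightarrow> dobj A a \<longrightarrow> dobj A a' \<longrightarrow>
        cmor A C \<eta> \<Delta>' \<Delta> \<longrightarrow> dmor A C f a a' \<longrightarrow>
        (\<forall>X\<in>DQ A C xs M \<Delta> a.
           \<Phi> \<Delta>' a' (DQact A C xs M \<Delta>' a' \<eta> f X) = TQact A C xs M \<Delta>' a' \<eta> f (\<Phi> \<Delta> a X)))"
proof -
  interpret type_category A C
    by unfold_locales (rule assms(1))
  let ?P = "\<lambda>\<Delta> a. {p. deriv A C xs p \<Delta> M a}"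
  have classes: "{q. dcong A C xs M p q} = {q \<in> ?P \<Delta> a. (dv_el p, dv_el q) \<in> sem_rel A C xs M \<Delta> a}"
    if "p \<in> ?P \<Delta> a" for p \<Delta> a
    using dcong_iff_sem_rel[OF assms(3)] that by auto
  show ?thesis
  proof (intro exI[of _ "\<lambda>\<Delta> a X. {p \<in> ?P \<Delta> a. dv_el p \<in> X}"] conjI allI impI ballI)
    fix \<Delta> a
    assume "cobj A (length xs) \<Delta>" "dobj A a"
    then show "bij_betw (\<lambda>X. {p \<in> ?P \<Delta> a. dv_el p \<in> X}) (DQ A C xs M \<Delta> a) (TQ A C xs M \<Delta> a)"
      unfolding DQ_eq TQ_def
      by (intro bij_betw_preimage_quotient sem_rel_equiv dv_el_image[OF assms(3)] classes)
  next
    fix \<Delta> \<Delta>' a a' \<eta> f X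
    assume "cobj A (length xs) \<Delta>" "cobj A (length xs) \<Delta>'" "dobj A a" "dobj A a'"
      and \<eta>: "cmor A C \<eta> \<Delta>' \<Delta>" and f: "dmor A C f a a'" and X: "X \<in> DQ A C xs M \<Delta> a"
    have "X \<subseteq> dv_el ` ?P \<Delta> a"
      using X sem_rel_equiv dv_el_image[OF assms(3)] \<open>cobj A (length xs) \<Delta>\<close> \<open>dobj A a\<close>
      unfolding DQ_eq by (metis Union_quotient Union_upper)
    then show "{p \<in> ?P \<Delta>' a'. dv_el p \<in> DQact A C xs M \<Delta>' a' \<eta> f X} =
        TQact A C xs M \<Delta>' a' \<eta> f {p \<in> ?P \<Delta> a. dv_el p \<in> X}"
      unfolding DQact_eq TQact_def
      using dv_el_sem_act[OF _ \<eta> f] lact_deriv[OF ract_deriv[OF _ \<eta>] f] classes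
      by (intro preimage_UN_Image_eq) auto
  qed
qed

end
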